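(* Assume (A2), (A3), (A4) and (A7). Then for the iterates of D-MSSCA, for all $T>1$ and $\alpha,\beta\in(0,1)$, $$\sum_{t=1}^T\phi^t\le\frac{\bar\sigma^2}{n^2b_0\beta}+\frac{2\beta\bar\sigma^2T}{n^2}+\frac{6L^2\alpha^2}{n^2\beta}\sum_{t=1}^{T-1}\mathbb{E}\|\delta^t\|^2+\frac{12L^2}{\beta n^2}\sum_{t=1}^T\mathbb{E}[(\theta^t)^2],$$ $$\sum_{t=1}^T\upsilon^t\le\frac{\bar\sigma^2}{b_0\beta}+2\beta\bar\sigma^2T+\frac{6L^2\alpha^2}{\beta}\sum_{t=1}^{T-1}\mathbb{E}\|\delta^t\|^2+\frac{12L^2}{\beta}\sum_{t=1}^T\mathbb{E}[(\theta^t)^2].$$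
   Context: Problem. Let $n,d\ge 1$. For $i\in\{1,\dots,n\}$ and each value of a random variable $\xi$, $f_i(\cdot,\xi):\mathbb{R}^d\to\mathbb{R}$ is differentiable (possibly non-convex); $u_i(x):=\mathbb{E}[f_i(x,\xi_i)]$ and $u(x):=\frac1n\sum_{i=1}^n u_i(x)$. The function $h:\mathbb{R}^d\to\mathbb{R}$ is convex (possibly non-smooth), $g:\mathbb{R}^d\to\mathbb{R}$ is convex, $\mathcal{X}:=\{x\in\mathbb{R}^d: g(x)\le 0\}$, and $\mathbb{1}_{\mathcal X}$ is its indicator function ($0$ on $\mathcal X$, $+\infty$ outside). Let $U:=u+h$ and $U^\star:=\min_{x\in\mathcal X}U(x)$. The $n$ agents communicate over a graph with vertex set $\{1,\dots,n\}$ and edge set $\mathcal E$ through a matrix $W\in\mathbb{R}^{n\times n}$; $\lambda_W:=\lambda_{\max}(W-\frac1n\mathbf 1_n\mathbf 1_n^\top)$. Algorithm D-MSSCA. Parameters: $\alpha,\beta\in(0,1)$, $\mu>0$, an initial batch size $b_0\in\mathbb N$. For each $i$, each $x'\in\mathbb{R}^d$ and each sample $\xi$, a surrogate $\hat f_i(\cdot,x',\xi):\mathbb{R}^d\to\mathbb{R}$ is used that is $\mu$-strongly convex and satisfies $\nabla_x\hat f_i(x',x',\xi)=\nabla f_i(x',\xi)$. Node $i$ draws samples $\xi_i^{1,1},\dots,\xi_i^{1,b_0}$ (with $\xi_i^1:=\xi_i^{1,1}$) and then $\xi_i^{t}$ for $t\ge2$. Initialization: $x_i^1=\bar x^1$ for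 all $i$, for a common point $\bar x^1\in\mathcal X$; $z_i^1=y_i^1=\frac1{b_0}\sum_{r=1}^{b_0}\nabla f_i(x_i^1,\xi_i^{1,r})$; $z_i^0:=0$ and $\nabla f_i(x_i^0,\xi_i^1):=0$. For $t\ge1$, each node $i$ computes $\tilde f_i(x):=\hat f_i(x,x_i^t,\xi_i^t)+(1-\beta)\langle z_i^{t-1}-\nabla f_i(x_i^{t-1},\xi_i^t),x-x_i^t\rangle$, $\hat x_i^t:=\arg\min_{x\in\mathcal X}\ \tilde f_i(x)+\langle y_i^t-z_i^t,x-x_i^t\rangle+h(x)$, $x_i^{t+1}:=\sum_{j=1}^nW_{ij}\big(x_j^t+\alpha(\hat x_j^t-x_j^t)\big)$, $z_i^{t+1}:=\nabla f_i(x_i^{t+1},\xi_i^{t+1})+(1-\beta)\big(z_i^t-\nabla f_i(x_i^t,\xi_i^{t+1})\big)$, $y_i^{t+1}:=\sum_{j=1}^nW_{ij}\big(y_j^t+z_j^{t+1}-z_j^t\big)$. Notation. $x^t,y^t,z^t,\hat x^t\in\mathbb{R}^{nd}$ are the stacked vectors $[x_1^t;\dots;x_n^t]$ etc.; $\bar x^t=\frac1n\sum_ix_i^t$, and similarly $\bar y^t,\bar z^t$. $\nabla\mathbf u(x^t):=[\nabla u_1(x_1^t);\dots;\nabla u_n(x_n^t)]$ and $\overline{\nabla u}(x^t):=\frac1n\sum_i\nabla u_i(x_i^t)$. Define $\theta^t:=\|x^t-(\mathbf 1_n\otimes I_d)\bar x^t\|$, $\delta^t:=\hat x^t-x^t$,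 $\phi^t:=\mathbb{E}\|\bar z^t-\overline{\nabla u}(x^t)\|^2$, $\upsilon^t:=\mathbb{E}\|z^t-\nabla\mathbf u(x^t)\|^2$, $\varepsilon^t:=\mathbb{E}\|y^t-(\mathbf 1_n\otimes I_d)\bar y^t\|^2$. Norms are Euclidean. Assumptions. (A1) $\inf_{x}U(x)>-\infty$. (A2) With $\mathcal H^t$ the history generated by $\{\xi_i^\tau\}_{i\le n,\tau\le t-1}$, $\mathbb{E}[\nabla f_i(x^t,\xi_i^t)\mid\mathcal H^t]=\nabla u_i(x^t)$. (A3) $\mathbb{E}\|\nabla f_i(x,\xi_i^t)-\nabla u_i(x)\|^2\le\sigma_i^2$ for all $x$; $\bar\sigma^2:=\sum_i\sigma_i^2$. (A4) $\mathbb{E}\|\nabla f_i(x,\xi)-\nabla f_i(y,\xi)\|^2\le L^2\|x-y\|^2$ for all $x,y$. (A7) The graph is undirected and connected, $W$ is doubly stochastic, $W_{ii}>0$ for all $i$, and for $i\ne j$, $W_{ij}>0$ if $(i,j)\in\mathcal E$ and $W_{ij}=0$ otherwise. *)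

theory Defs
  imports "HOL-Probability.Probability"
begin

definition strongly_convex :: "real \<Rightarrow> ('d::real_inner \<Rightarrow> real) \<Rightarrow> bool" where
  "strongly_convex \<mu> F \<longleftrightarrow> convex_on UNIV (\<lambda>x. F x - (\<mu> / 2) * (norm x)\<^sup>2)"

text \<open>Euclidean norm of a stacked vector [v_0; ...; v_(n-1)] in R^(nd).\<close>
definition stk_norm :: "nat \<Rightarrow> (nat \<Rightarrow> 'd::real_normed_vector) \<Rightarrow> real" where
  "stk_norm n v = sqrt (\<Sum>i<n. (norm (v i))\<^sup>2)"

definition avg :: "nat \<Rightarrow> (nat \<Rightarrow> 'd::real_vector) \<Rightarrow> 'd" where
  "avg n v = (1 / real n) *\<^sub>R (\<Sum>i<n. v i)"

text \<open>Index set of the drawn samples: sample (i,t,r) is the r-th sample of node i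
  at time t; at t = 1 there are b0 samples r = 1..b0, for t >= 2 only r = 1.
  Nodes are indexed 0..n-1.\<close>
definition sample_idx :: "nat \<Rightarrow> nat \<Rightarrow> (nat \<times> nat \<times> nat) set" where
  "sample_idx n b0 = {(i, t, r). i < n \<and> ((t = 1 \<and> 1 \<le> r \<and> r \<le> b0) \<or> (2 \<le> t \<and> r = 1))}"

definition hist :: "'a measure \<Rightarrow> 's measure \<Rightarrow> nat \<Rightarrow> nat \<Rightarrow> (nat \<Rightarrow> nat \<Rightarrow> nat \<Rightarrow> 'a \<Rightarrow> 's)
    \<Rightarrow> nat \<Rightarrow> 'a measure" where
  "hist M S n b0 \<xi> t = sigma (space M)
     {\<xi> i \<tau> r -` A \<inter> space M | i \<tau> r A. (i, \<tau>, r) \<in> sample_idx n b0 \<and> \<tau> \<le> t \<and> A \<in> sets S}"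

end

(*
  Let e_i^t = z_i^t - grad u_i(x_i^t) be the gradient-tracking error. The momentum update gives
  e^(t+1) = (1 - beta) e^t + w^t(xi^(t+1)), where the innovation w^t is a centred function of the
  fresh samples xi^(t+1), while e^t, x^t and x^(t+1) are measurable w.r.t. the history H^t, which is
  independent of xi^(t+1). Hence second moments add:
    E|e^(t+1)|^2 <= (1 - beta) E|e^t|^2 + E|w^t|^2.
  By (A3) and (A4), E|w^t|^2 <= 2 beta^2 sigma^2 + 2 L^2 E|x^(t+1) - x^t|^2, and since W is
  doubly stochastic, |x^(t+1) - x^t|^2 <= 3 alpha^2 |delta^t|^2 + 6 (theta^t)^2. The initial
  mini-batch gives E|e^1|^2 <= sigma^2 / b0. Summing this linear recursion over t and dividing by
  beta bounds the sum of upsilon^t; the network average, with weights 1/n, satisfies the same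
  recursion, which bounds the sum of phi^t.
*)

theory Submission
  imports Defs
begin

section \<open>Elementary inequalities\<close>

lemma norm_add_sq_le:
  fixes a b :: "'a::real_normed_vector"
  shows "(norm (a + b))\<^sup>2 \<le> 2 * (norm a)\<^sup>2 + 2 * (norm b)\<^sup>2"
proof -
  have "(norm (a + b))\<^sup>2 \<le> (norm a + norm b)\<^sup>2"
    by (simp add: norm_triangle_ineq power_mono)
  also have "\<dots> \<le> 2 * (norm a)\<^sup>2 + 2 * (norm b)\<^sup>2"
    by (smt (verit) power2_diff power2_sum zero_le_power2)
  finally show ?thesis .
qed

lemma norm_diff_add_sq_le:
  fixes a b c :: "'a::real_normed_vector"
  shows "(norm (a - b + c))\<^sup>2 \<le> 3 * (norm a)\<^sup>2 + 3 * (norm b)\<^sup>2 + 3 * (norm c)\<^sup>2"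
proof -
  have "norm (a - b + c) \<le> norm a + norm b + norm c"
    by (metis norm_triangle_ineq norm_triangle_ineq4 add_right_mono order_trans)
  then have "(norm (a - b + c))\<^sup>2 \<le> (norm a + norm b + norm c)\<^sup>2"
    by (simp add: power_mono)
  also have "\<dots> \<le> 3 * (norm a)\<^sup>2 + 3 * (norm b)\<^sup>2 + 3 * (norm c)\<^sup>2"
    by (smt (verit) power2_diff power2_sum zero_le_power2)
  finally show ?thesis .
qed

lemma norm_scaleR_add_sq_le:
  fixes a b :: "'a::real_normed_vector"
  assumes "0 \<le> \<beta>" "\<beta> \<le> 1"
  shows "(norm (\<beta> *\<^sub>R a + (1 - \<beta>) *\<^sub>R b))\<^sup>2 \<le> 2 * \<beta>\<^sup>2 * (norm a)\<^sup>2 + 2 * (norm b)\<^sup>2"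
proof -
  have "(norm (\<beta> *\<^sub>R a + (1 - \<beta>) *\<^sub>R b))\<^sup>2 \<le> 2 * \<beta>\<^sup>2 * (norm a)\<^sup>2 + 2 * (1 - \<beta>)\<^sup>2 * (norm b)\<^sup>2"
    using norm_add_sq_le[of "\<beta> *\<^sub>R a" "(1 - \<beta>) *\<^sub>R b"] by (simp add: power_mult_distrib)
  moreover have "2 * (1 - \<beta>)\<^sup>2 * (norm b)\<^sup>2 \<le> 2 * (norm b)\<^sup>2"
    using assms by (simp add: power_le_one mult_left_le_one_le)
  ultimately show ?thesis
    by linarith
qed

lemma norm_sq_convex_sum_le:
  fixes v :: "nat \<Rightarrow> 'a::real_normed_vector"
  assumes nonneg: "\<And>j. j < n \<Longrightarrow> a j \<ge> 0" and sum_1: "(\<Sum>j<n. a j) = 1"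
  shows "(norm (\<Sum>j<n. a j *\<^sub>R v j))\<^sup>2 \<le> (\<Sum>j<n. a j * (norm (v j))\<^sup>2)"
proof -
  have "norm (\<Sum>j<n. a j *\<^sub>R v j) \<le> (\<Sum>j<n. norm (a j *\<^sub>R v j))"
    by (rule norm_sum)
  also have "\<dots> = (\<Sum>j<n. sqrt (a j) * (sqrt (a j) * norm (v j)))"
    using nonneg by (intro sum.cong) (auto simp: mult.assoc[symmetric])
  finally have "(norm (\<Sum>j<n. a j *\<^sub>R v j))\<^sup>2 \<le> (\<Sum>j<n. sqrt (a j) * (sqrt (a j) * norm (v j)))\<^sup>2"
    by (simp add: power_mono)
  also have "\<dots> \<le> (\<Sum>j<n. (sqrt (a j))\<^sup>2) * (\<Sum>j<n. (sqrt (a j) * norm (v j))\<^sup>2)"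
    by (rule Cauchy_Schwarz_ineq_sum)
  also have "\<dots> = (\<Sum>j<n. a j * (norm (v j))\<^sup>2)"
    using nonneg sum_1 by (simp add: power_mult_distrib)
  finally show ?thesis .
qed

lemma doubly_stochastic_norm_sq_le:
  fixes v :: "nat \<Rightarrow> 'a::real_normed_vector"
  assumes nonneg: "\<And>i j. i < n \<Longrightarrow> j < n \<Longrightarrow> W i j \<ge> 0"
    and row: "\<And>i. i < n \<Longrightarrow> (\<Sum>j<n. W i j) = 1"
    and col: "\<And>j. j < n \<Longrightarrow> (\<Sum>i<n. W i j) = 1"
  shows "(\<Sum>i<n. (norm (\<Sum>j<n. W i j *\<^sub>R v j))\<^sup>2) \<le> (\<Sum>j<n. (norm (v j))\<^sup>2)"
proof -
  have "(\<Sum>i<n. (norm (\<Sum>j<n. W i j *\<^sub>R v j))\<^sup>2) \<le> (\<Sum>i<n. \<Sum>j<n. W i j * (norm (v j))\<^sup>2)"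
    by (intro sum_mono norm_sq_convex_sum_le) (use nonneg row in auto)
  also have "\<dots> = (\<Sum>j<n. (\<Sum>i<n. W i j) * (norm (v j))\<^sup>2)"
    by (subst sum.swap) (simp add: sum_distrib_right)
  also have "\<dots> = (\<Sum>j<n. (norm (v j))\<^sup>2)"
    using col by simp
  finally show ?thesis .
qed

lemma mixing_step_norm_sq_le:
  fixes x xh x' :: "nat \<Rightarrow> 'a::real_normed_vector"
  assumes nonneg: "\<And>i j. i < n \<Longrightarrow> j < n \<Longrightarrow> W i j \<ge> 0"
    and row: "\<And>i. i < n \<Longrightarrow> (\<Sum>j<n. W i j) = 1"
    and col: "\<And>j. j < n \<Longrightarrow> (\<Sum>i<n. W i j) = 1"
    and step: "\<And>i. i < n \<Longrightarrow> x' i = (\<Sum>j<n. W i j *\<^sub>R (x j + \<alpha> *\<^sub>R (xh j - x j)))"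
  shows "(\<Sum>i<n. (norm (x' i - x i))\<^sup>2)
      \<le> 3 * \<alpha>\<^sup>2 * (\<Sum>i<n. (norm (xh i - x i))\<^sup>2) + 6 * (\<Sum>i<n. (norm (x i - avg n x))\<^sup>2)"
proof -
  define y where "y j = x j - avg n x" for j
  define d where "d j = xh j - x j" for j
  have split: "x' i - x i = (\<Sum>j<n. W i j *\<^sub>R y j) - y i + \<alpha> *\<^sub>R (\<Sum>j<n. W i j *\<^sub>R d j)"
    if "i < n" for i
  proof -
    have "(\<Sum>j<n. W i j *\<^sub>R (x j + \<alpha> *\<^sub>R (xh j - x j)))
        = (\<Sum>j<n. W i j *\<^sub>R y j) + (\<Sum>j<n. W i j) *\<^sub>R avg n x + \<alpha> *\<^sub>R (\<Sum>j<n. W i j *\<^sub>R d j)"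
      by (simp add: y_def d_def sum.distrib sum_subtractf scaleR_sum_right scaleR_sum_left
          algebra_simps)
    then show ?thesis
      using step[OF that] row[OF that] by (simp add: y_def)
  qed
  have "(norm (x' i - x i))\<^sup>2 \<le> 3 * (norm (\<Sum>j<n. W i j *\<^sub>R y j))\<^sup>2
      + 3 * (norm (y i))\<^sup>2 + 3 * (norm (\<alpha> *\<^sub>R (\<Sum>j<n. W i j *\<^sub>R d j)))\<^sup>2" if "i < n" for i
    unfolding split[OF that] by (rule norm_diff_add_sq_le)
  then have "(\<Sum>i<n. (norm (x' i - x i))\<^sup>2) \<le> (\<Sum>i<n. 3 * (norm (\<Sum>j<n. W i j *\<^sub>R y j))\<^sup>2
      + 3 * (norm (y i))\<^sup>2 + 3 * (norm (\<alpha> *\<^sub>R (\<Sum>j<n. W i j *\<^sub>R d j)))\<^sup>2)"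
    by (intro sum_mono) simp
  also have "\<dots> = 3 * (\<Sum>i<n. (norm (\<Sum>j<n. W i j *\<^sub>R y j))\<^sup>2) + 3 * (\<Sum>i<n. (norm (y i))\<^sup>2)
      + 3 * \<alpha>\<^sup>2 * (\<Sum>i<n. (norm (\<Sum>j<n. W i j *\<^sub>R d j))\<^sup>2)"
    by (simp add: sum.distrib sum_distrib_left power_mult_distrib mult.assoc)
  also have "\<dots> \<le> 3 * (\<Sum>i<n. (norm (y i))\<^sup>2) + 3 * (\<Sum>i<n. (norm (y i))\<^sup>2)
      + 3 * \<alpha>\<^sup>2 * (\<Sum>i<n. (norm (d i))\<^sup>2)"
    using doubly_stochastic_norm_sq_le[OF nonneg row col, of y]
      doubly_stochastic_norm_sq_le[OF nonneg row col, of d]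
    by (intro add_mono mult_left_mono) auto
  finally show ?thesis
    by (simp add: y_def d_def)
qed

lemma stk_norm_sq: "(stk_norm n v)\<^sup>2 = (\<Sum>i<n. (norm (v i))\<^sup>2)"
  unfolding stk_norm_def by (simp add: sum_nonneg)

section \<open>Linear recursions\<close>

lemma weighted_sum_le_of_recursion:
  fixes a c :: "nat \<Rightarrow> ennreal"
  assumes beta: "0 \<le> \<beta>" "\<beta> \<le> 1"
    and step: "\<And>t. 1 \<le> t \<Longrightarrow> t < T \<Longrightarrow> a (Suc t) \<le> ennreal (1 - \<beta>) * a t + c t"
  shows "ennreal \<beta> * (\<Sum>t=1..T. a t) \<le> a 1 + (\<Sum>t=1..T-1. c t)"
proof (cases "T = 0")
  case False
  have split_1: "ennreal \<beta> + ennreal (1 - \<beta>) = 1"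
    using beta by (simp flip: ennreal_plus)
  have "ennreal \<beta> * (\<Sum>t=1..m. a t) + ennreal (1 - \<beta>) * a m \<le> a 1 + (\<Sum>t=1..m-1. c t)"
    if "1 \<le> m" "m \<le> T" for m
    using that
  proof (induction m rule: dec_induct)
    case base
    then show ?case
      by (simp flip: distrib_right add: split_1)
  next
    case (step m)
    have "ennreal \<beta> * (\<Sum>t=1..Suc m. a t) + ennreal (1 - \<beta>) * a (Suc m)
        = ennreal \<beta> * (\<Sum>t=1..m. a t) + a (Suc m)"
      using step.hyps by (simp add: distrib_left add.assoc flip: distrib_right add: split_1)
    also have "\<dots> \<le> (ennreal \<beta> * (\<Sum>t=1..m. a t) + ennreal (1 - \<beta>) * a m) + c m"
      using assms(3)[of m] step.hyps step.prems by (simp add: add.assoc add_left_mono)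
    also have "\<dots> \<le> a 1 + ((\<Sum>t=1..m-1. c t) + c m)"
      using step.IH step.prems by (simp add: add.assoc add_right_mono)
    also have "(\<Sum>t=1..m-1. c t) + c m = (\<Sum>t=1..Suc m-1. c t)"
      using step.hyps by (cases m) auto
    finally show ?case .
  qed
  from this[of T] False have
      "ennreal \<beta> * (\<Sum>t=1..T. a t) + ennreal (1 - \<beta>) * a T \<le> a 1 + (\<Sum>t=1..T-1. c t)"
    by simp
  then show ?thesis
    by (rule order_trans[rotated]) simp
qed simp

lemma sum_le_of_affine_recursion:
  fixes a d e :: "nat \<Rightarrow> ennreal"
  assumes beta: "0 < \<beta>" "\<beta> \<le> 1"
    and step: "\<And>t. 1 \<le> t \<Longrightarrow> t < T \<Longrightarrow>
      a (Suc t) \<le> ennreal (1 - \<beta>) * a t + (ennreal A + ennreal B * d t + ennreal C * e t)"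
    and first: "a 1 \<le> ennreal a0"
    and nonneg: "0 \<le> A" "0 \<le> B" "0 \<le> C" "0 \<le> a0"
  shows "(\<Sum>t=1..T. a t) \<le> ennreal (a0 / \<beta>) + ennreal (A * real T / \<beta>)
      + ennreal (B / \<beta>) * (\<Sum>t=1..T-1. d t) + ennreal (C / \<beta>) * (\<Sum>t=1..T. e t)"
proof -
  have "ennreal \<beta> * (\<Sum>t=1..T. a t)
      \<le> a 1 + (\<Sum>t=1..T-1. ennreal A + ennreal B * d t + ennreal C * e t)"
    by (rule weighted_sum_le_of_recursion) (use beta step in auto)
  also have "\<dots> \<le> ennreal a0 + (of_nat (T - 1) * ennreal A
      + ennreal B * (\<Sum>t=1..T-1. d t) + ennreal C * (\<Sum>t=1..T-1. e t))"
    using first by (simp add: sum.distrib sum_distrib_left add_right_mono)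
  finally have weighted: "ennreal \<beta> * (\<Sum>t=1..T. a t) \<le> ennreal a0 + (of_nat (T - 1) * ennreal A
      + ennreal B * (\<Sum>t=1..T-1. d t) + ennreal C * (\<Sum>t=1..T-1. e t))" .
  have "(\<Sum>t=1..T. a t) = ennreal (1 / \<beta>) * (ennreal \<beta> * (\<Sum>t=1..T. a t))"
    using beta by (simp add: mult.assoc[symmetric] flip: ennreal_mult)
  also have "\<dots> \<le> ennreal (1 / \<beta>) * (ennreal a0 + (of_nat (T - 1) * ennreal A
      + ennreal B * (\<Sum>t=1..T-1. d t) + ennreal C * (\<Sum>t=1..T-1. e t)))"
    by (rule mult_left_mono[OF weighted]) simp
  also have "\<dots> = ennreal (a0 / \<beta>) + ennreal (real (T - 1) * A / \<beta>)
      + ennreal (B / \<beta>) * (\<Sum>t=1..T-1. d t) + ennreal (C / \<beta>) * (\<Sum>t=1..T-1. e t)"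
    using beta nonneg
    by (simp add: distrib_left mult.assoc[symmetric] ennreal_of_nat_eq_real_of_nat add.assoc
        flip: ennreal_mult)
  also have "\<dots> \<le> ennreal (a0 / \<beta>) + ennreal (A * real T / \<beta>)
      + ennreal (B / \<beta>) * (\<Sum>t=1..T-1. d t) + ennreal (C / \<beta>) * (\<Sum>t=1..T. e t)"
    using beta nonneg
    by (intro add_mono order_refl mult_left_mono ennreal_leI sum_mono2 divide_right_mono)
      (auto simp: mult.commute intro!: mult_left_mono)
  finally show ?thesis .
qed

section \<open>Independent centred noise\<close>

lemma nn_integral_norm_sq_scaleR:
  fixes f :: "'a \<Rightarrow> 'd::real_normed_vector"
  assumes "f \<in> borel_measurable M"
  shows "(\<integral>\<^sup>+\<omega>. ennreal ((norm (c *\<^sub>R f \<omega>))\<^sup>2) \<partial>M)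
    = ennreal (c\<^sup>2) * (\<integral>\<^sup>+\<omega>. ennreal ((norm (f \<omega>))\<^sup>2) \<partial>M)"
proof -
  have "(\<integral>\<^sup>+\<omega>. ennreal ((norm (c *\<^sub>R f \<omega>))\<^sup>2) \<partial>M)
      = (\<integral>\<^sup>+\<omega>. ennreal (c\<^sup>2) * ennreal ((norm (f \<omega>))\<^sup>2) \<partial>M)"
    by (simp add: power_mult_distrib ennreal_mult)
  also have "\<dots> = ennreal (c\<^sup>2) * (\<integral>\<^sup>+\<omega>. ennreal ((norm (f \<omega>))\<^sup>2) \<partial>M)"
    using assms by (intro nn_integral_cmult) measurable
  finally show ?thesis .
qed

lemma nn_integral_stk_norm_sq:
  assumes "\<And>i. i < n \<Longrightarrow> f i \<in> borel_measurable M"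
  shows "(\<integral>\<^sup>+\<omega>. ennreal ((stk_norm n (\<lambda>i. f i \<omega>))\<^sup>2) \<partial>M)
    = (\<Sum>i<n. \<integral>\<^sup>+\<omega>. ennreal ((norm (f i \<omega>))\<^sup>2) \<partial>M)"
proof -
  have "(\<integral>\<^sup>+\<omega>. ennreal ((stk_norm n (\<lambda>i. f i \<omega>))\<^sup>2) \<partial>M)
      = (\<integral>\<^sup>+\<omega>. (\<Sum>i<n. ennreal ((norm (f i \<omega>))\<^sup>2)) \<partial>M)"
    by (simp add: stk_norm_sq)
  also have "\<dots> = (\<Sum>i<n. \<integral>\<^sup>+\<omega>. ennreal ((norm (f i \<omega>))\<^sup>2) \<partial>M)"
  proof (rule nn_integral_sum)
    fix i assume "i \<in> {..<n}"
    then have "f i \<in> borel_measurable M"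
      using assms by simp
    then show "(\<lambda>\<omega>. ennreal ((norm (f i \<omega>))\<^sup>2)) \<in> borel_measurable M"
      by measurable
  qed
  finally show ?thesis .
qed

lemma (in prob_space) nn_integral_norm_sq_add_centered:
  fixes w :: "'a \<Rightarrow> 'd::euclidean_space"
  assumes w_int: "integrable M w" and w_mean: "(\<integral>s. w s \<partial>M) = 0"
  shows "(\<integral>\<^sup>+s. ennreal ((norm (u + w s))\<^sup>2) \<partial>M)
    = ennreal ((norm u)\<^sup>2) + (\<integral>\<^sup>+s. ennreal ((norm (w s))\<^sup>2) \<partial>M)"
proof (cases "(\<integral>\<^sup>+s. ennreal ((norm (w s))\<^sup>2) \<partial>M) = \<infinity>")
  case True
  have "(\<integral>\<^sup>+s. ennreal ((norm (w s))\<^sup>2) \<partial>M)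
      \<le> (\<integral>\<^sup>+s. ennreal 2 * ennreal ((norm (u + w s))\<^sup>2) + ennreal (2 * (norm u)\<^sup>2) \<partial>M)"
  proof (intro nn_integral_mono)
    fix s
    have "(norm (w s))\<^sup>2 \<le> 2 * (norm (u + w s))\<^sup>2 + 2 * (norm u)\<^sup>2"
      using norm_add_sq_le[of "u + w s" "- u"] by simp
    then show "ennreal ((norm (w s))\<^sup>2)
        \<le> ennreal 2 * ennreal ((norm (u + w s))\<^sup>2) + ennreal (2 * (norm u)\<^sup>2)"
      by (metis ennreal_leI ennreal_mult'' ennreal_plus zero_le_power2 mult_nonneg_nonneg
          zero_le_numeral)
  qed
  also have "\<dots> = ennreal 2 * (\<integral>\<^sup>+s. ennreal ((norm (u + w s))\<^sup>2) \<partial>M) + ennreal (2 * (norm u)\<^sup>2)"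
    using w_int by (simp add: nn_integral_add nn_integral_cmult emeasure_space_1)
  finally have "(\<integral>\<^sup>+s. ennreal ((norm (u + w s))\<^sup>2) \<partial>M) = \<infinity>"
    using True by (auto simp: ennreal_mult_eq_top_iff top_unique)
  then show ?thesis
    using True by simp
next
  case False
  have w_sq_int: "integrable M (\<lambda>s. (norm (w s))\<^sup>2)"
    using False w_int
    by (intro integrableI_nn_integral_finite
        [where x="enn2real (\<integral>\<^sup>+s. ennreal ((norm (w s))\<^sup>2) \<partial>M)"])
      (auto simp: less_top)
  have inner_int: "integrable M (\<lambda>s. inner u (w s))"
    using w_int by (rule integrable_inner_right)
  have expand: "(norm (u + w s))\<^sup>2 = (norm u)\<^sup>2 + 2 * inner u (w s) + (norm (w s))\<^sup>2" for s
    by (simp add: power2_norm_eq_inner inner_add_left inner_add_right inner_commute)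
  have "(\<integral>s. inner u (w s) \<partial>M) = 0"
    using w_int w_mean by simp
  then have "(\<integral>s. (norm (u + w s))\<^sup>2 \<partial>M) = (norm u)\<^sup>2 + (\<integral>s. (norm (w s))\<^sup>2 \<partial>M)"
    unfolding expand using inner_int w_sq_int by (simp add: prob_space)
  moreover have "integrable M (\<lambda>s. (norm (u + w s))\<^sup>2)"
    unfolding expand using inner_int w_sq_int by auto
  ultimately show ?thesis
    using w_sq_int by (simp add: nn_integral_eq_integral ennreal_plus)
qed

lemma (in prob_space) nn_integral_norm_sq_centered_le:
  fixes w :: "'a \<Rightarrow> 'd::euclidean_space"
  assumes "integrable M w"
  shows "(\<integral>\<^sup>+s. ennreal ((norm (w s - (\<integral>s. w s \<partial>M)))\<^sup>2) \<partial>M) \<le> (\<integral>\<^sup>+s. ennreal ((norm (w s))\<^sup>2) \<partial>M)"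
proof -
  let ?m = "\<integral>s. w s \<partial>M"
  have "(\<integral>\<^sup>+s. ennreal ((norm (w s))\<^sup>2) \<partial>M) = (\<integral>\<^sup>+s. ennreal ((norm (?m + (w s - ?m)))\<^sup>2) \<partial>M)"
    by simp
  also have "\<dots> = ennreal ((norm ?m)\<^sup>2) + (\<integral>\<^sup>+s. ennreal ((norm (w s - ?m))\<^sup>2) \<partial>M)"
    using assms by (intro nn_integral_norm_sq_add_centered) (auto simp: prob_space)
  finally show ?thesis
    by simp
qed

lemma (in prob_space) momentum_noise_centered:
  fixes G :: "'v \<Rightarrow> 'a \<Rightarrow> 'd::euclidean_space"
  assumes unbiased: "\<And>v. integrable M (G v) \<and> (\<integral>s. G v s \<partial>M) = g v"
  shows "integrable M (\<lambda>s. (G v' s - g v') - c *\<^sub>R (G v s - g v))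
    \<and> (\<integral>s. (G v' s - g v') - c *\<^sub>R (G v s - g v) \<partial>M) = 0"
  using unbiased[of v] unbiased[of v'] by (simp add: prob_space)

text \<open>The momentum noise is \<open>\<beta> a + (1 - \<beta>) b\<close> with a single-sample error \<open>a\<close>, bounded by the
  variance, and a centred gradient difference \<open>b\<close>, bounded by the mean-square Lipschitz constant.\<close>
lemma (in prob_space) momentum_noise_sq_le:
  fixes G :: "'v::real_normed_vector \<Rightarrow> 'a \<Rightarrow> 'd::euclidean_space"
  assumes unbiased: "\<And>v. integrable M (G v) \<and> (\<integral>s. G v s \<partial>M) = g v"
    and variance: "\<And>v. (\<integral>\<^sup>+s. ennreal ((norm (G v s - g v))\<^sup>2) \<partial>M) \<le> ennreal \<sigma>2"
    and lipschitz: "\<And>v w.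
      (\<integral>\<^sup>+s. ennreal ((norm (G v s - G w s))\<^sup>2) \<partial>M) \<le> ennreal (L2 * (norm (v - w))\<^sup>2)"
    and beta: "0 \<le> \<beta>" "\<beta> \<le> 1" and nonneg: "0 \<le> L2" "0 \<le> \<sigma>2"
  shows "(\<integral>\<^sup>+s. ennreal ((norm ((G v' s - g v') - (1 - \<beta>) *\<^sub>R (G v s - g v)))\<^sup>2) \<partial>M)
    \<le> ennreal (2 * \<beta>\<^sup>2 * \<sigma>2) + ennreal (2 * L2 * (norm (v' - v))\<^sup>2)"
proof -
  define a where "a s = G v' s - g v'" for s
  define b where "b s = (G v' s - G v s) - (g v' - g v)" for s
  have meas: "a \<in> borel_measurable M" "b \<in> borel_measurable M"
    using unbiased[of v] unbiased[of v'] unfolding a_def b_def by auto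
  have split: "(G v' s - g v') - (1 - \<beta>) *\<^sub>R (G v s - g v) = \<beta> *\<^sub>R a s + (1 - \<beta>) *\<^sub>R b s" for s
    unfolding a_def b_def by (simp add: algebra_simps)
  have "(\<integral>s. G v' s - G v s \<partial>M) = g v' - g v"
    using unbiased[of v] unbiased[of v'] by simp
  then have "(\<integral>\<^sup>+s. ennreal ((norm (b s))\<^sup>2) \<partial>M) \<le> (\<integral>\<^sup>+s. ennreal ((norm (G v' s - G v s))\<^sup>2) \<partial>M)"
    unfolding b_def using nn_integral_norm_sq_centered_le[of "\<lambda>s. G v' s - G v s"] unbiased by simp
  also have "\<dots> \<le> ennreal (L2 * (norm (v' - v))\<^sup>2)"
    by (rule lipschitz)
  finally have b_sq: "(\<integral>\<^sup>+s. ennreal ((norm (b s))\<^sup>2) \<partial>M) \<le> ennreal (L2 * (norm (v' - v))\<^sup>2)" .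
  have "(\<integral>\<^sup>+s. ennreal ((norm ((G v' s - g v') - (1 - \<beta>) *\<^sub>R (G v s - g v)))\<^sup>2) \<partial>M)
      \<le> (\<integral>\<^sup>+s. ennreal (2 * \<beta>\<^sup>2) * ennreal ((norm (a s))\<^sup>2)
        + ennreal 2 * ennreal ((norm (b s))\<^sup>2) \<partial>M)"
  proof (rule nn_integral_mono)
    fix s
    have "ennreal ((norm ((G v' s - g v') - (1 - \<beta>) *\<^sub>R (G v s - g v)))\<^sup>2)
        \<le> ennreal (2 * \<beta>\<^sup>2 * (norm (a s))\<^sup>2 + 2 * (norm (b s))\<^sup>2)"
      unfolding split using beta by (intro ennreal_leI norm_scaleR_add_sq_le)
    also have "\<dots> = ennreal (2 * \<beta>\<^sup>2) * ennreal ((norm (a s))\<^sup>2)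
        + ennreal 2 * ennreal ((norm (b s))\<^sup>2)"
      by (simp add: ennreal_plus ennreal_mult del: ennreal_numeral)
    finally show "ennreal ((norm ((G v' s - g v') - (1 - \<beta>) *\<^sub>R (G v s - g v)))\<^sup>2)
        \<le> ennreal (2 * \<beta>\<^sup>2) * ennreal ((norm (a s))\<^sup>2) + ennreal 2 * ennreal ((norm (b s))\<^sup>2)" .
  qed
  also have "\<dots> = ennreal (2 * \<beta>\<^sup>2) * (\<integral>\<^sup>+s. ennreal ((norm (a s))\<^sup>2) \<partial>M)
      + ennreal 2 * (\<integral>\<^sup>+s. ennreal ((norm (b s))\<^sup>2) \<partial>M)"
    using meas by (simp add: nn_integral_add nn_integral_cmult)
  also have "\<dots> \<le> ennreal (2 * \<beta>\<^sup>2) * ennreal \<sigma>2 + ennreal 2 * ennreal (L2 * (norm (v' - v))\<^sup>2)"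
    unfolding a_def by (intro add_mono mult_left_mono variance b_sq) auto
  also have "\<dots> = ennreal (2 * \<beta>\<^sup>2 * \<sigma>2) + ennreal (2 * L2 * (norm (v' - v))\<^sup>2)"
    using nonneg by (simp add: ennreal_mult mult.assoc del: ennreal_numeral)
  finally show ?thesis .
qed

lemma measurable_graph_restr_to_subalg:
  assumes sub: "subalgebra M F" and X: "X \<in> measurable M S"
  shows "(\<lambda>\<omega>. (\<omega>, X \<omega>)) \<in> measurable M (restr_to_subalg M F \<Otimes>\<^sub>M S)"
proof -
  have "(\<lambda>\<omega>. \<omega>) \<in> measurable M (restr_to_subalg M F)"
    using sub unfolding measurable_def subalgebra_def
    by (auto simp: sets_restr_to_subalg[OF sub] space_restr_to_subalg sets.Int_space_eq2 subsetD)
  then show ?thesis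
    using X by measurable
qed

lemma (in prob_space) pair_restr_to_subalg_distr_eq:
  assumes sub: "subalgebra M F" and X: "X \<in> measurable M S"
    and indep: "\<And>A B. A \<in> sets F \<Longrightarrow> B \<in> sets S \<Longrightarrow>
      emeasure M (A \<inter> (X -` B \<inter> space M)) = emeasure M A * emeasure M (X -` B \<inter> space M)"
  shows "restr_to_subalg M F \<Otimes>\<^sub>M distr M S X = distr M (restr_to_subalg M F \<Otimes>\<^sub>M S) (\<lambda>\<omega>. (\<omega>, X \<omega>))"
proof (rule pair_measure_eqI)
  interpret R: prob_space "restr_to_subalg M F"
    by (rule prob_space_restr_to_subalg[OF sub prob_space_axioms])
  interpret Q: prob_space "distr M S X"
    by (rule prob_space_distr[OF X])
  show "sigma_finite_measure (restr_to_subalg M F)" "sigma_finite_measure (distr M S X)"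
    by (simp_all add: R.sigma_finite_measure Q.sigma_finite_measure)
  fix A B assume A: "A \<in> sets (restr_to_subalg M F)" and B: "B \<in> sets (distr M S X)"
  have "A \<in> sets F"
    using A by (simp add: sets_restr_to_subalg[OF sub])
  then have "A \<subseteq> space M"
    using sub sets.sets_into_space unfolding subalgebra_def by metis
  then have "(\<lambda>\<omega>. (\<omega>, X \<omega>)) -` (A \<times> B) \<inter> space M = A \<inter> (X -` B \<inter> space M)"
    by auto
  then show "emeasure (restr_to_subalg M F) A * emeasure (distr M S X) B
      = emeasure (distr M (restr_to_subalg M F \<Otimes>\<^sub>M S) (\<lambda>\<omega>. (\<omega>, X \<omega>))) (A \<times> B)"
    using \<open>A \<in> sets F\<close> A B indep[of A B] X measurable_graph_restr_to_subalg[OF sub X]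
    by (simp add: emeasure_distr emeasure_restr_to_subalg[OF sub])
qed simp

lemma (in prob_space) nn_integral_indep_eval:
  fixes H :: "'a \<Rightarrow> 's \<Rightarrow> ennreal"
  assumes sub: "subalgebra M F" and X: "X \<in> measurable M S"
    and indep: "\<And>A B. A \<in> sets F \<Longrightarrow> B \<in> sets S \<Longrightarrow>
      emeasure M (A \<inter> (X -` B \<inter> space M)) = emeasure M A * emeasure M (X -` B \<inter> space M)"
    and H: "case_prod H \<in> borel_measurable (F \<Otimes>\<^sub>M S)"
  shows "(\<integral>\<^sup>+\<omega>. H \<omega> (X \<omega>) \<partial>M) = (\<integral>\<^sup>+\<omega>. (\<integral>\<^sup>+s. H \<omega> s \<partial>distr M S X) \<partial>M)"
proof -
  interpret Q: prob_space "distr M S X"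
    by (rule prob_space_distr[OF X])
  let ?R = "restr_to_subalg M F"
  have H_F: "case_prod H \<in> borel_measurable (F \<Otimes>\<^sub>M distr M S X)"
    using H by (simp add: measurable_cong_sets[OF sets_pair_measure_cong[OF refl sets_distr] refl])
  then have H_R: "case_prod H \<in> borel_measurable (?R \<Otimes>\<^sub>M distr M S X)"
    by (simp add: measurable_cong_sets
        [OF sets_pair_measure_cong[OF sets_restr_to_subalg[OF sub] refl] refl])
  have "(\<integral>\<^sup>+\<omega>. H \<omega> (X \<omega>) \<partial>M) = (\<integral>\<^sup>+p. case_prod H p \<partial>(?R \<Otimes>\<^sub>M distr M S X))"
    using H_R measurable_graph_restr_to_subalg[OF sub X]
    by (simp add: pair_restr_to_subalg_distr_eq[OF sub X indep] nn_integral_distr)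
  also have "\<dots> = (\<integral>\<^sup>+\<omega>. (\<integral>\<^sup>+s. H \<omega> s \<partial>distr M S X) \<partial>?R)"
    using Q.nn_integral_fst[OF H_R] by simp
  also have "\<dots> = (\<integral>\<^sup>+\<omega>. (\<integral>\<^sup>+s. H \<omega> s \<partial>distr M S X) \<partial>M)"
    using Q.borel_measurable_nn_integral[OF H_F] by (rule nn_integral_subalgebra2[OF sub])
  finally show ?thesis .
qed

lemma (in prob_space) nn_integral_norm_sq_indep_noise:
  fixes U :: "'a \<Rightarrow> 'd::euclidean_space" and w :: "'a \<Rightarrow> 's \<Rightarrow> 'd"
  assumes sub: "subalgebra M F" and X: "X \<in> measurable M S"
    and indep: "\<And>A B. A \<in> sets F \<Longrightarrow> B \<in> sets S \<Longrightarrow>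
      emeasure M (A \<inter> (X -` B \<inter> space M)) = emeasure M A * emeasure M (X -` B \<inter> space M)"
    and U: "U \<in> borel_measurable F"
    and w: "case_prod w \<in> borel_measurable (F \<Otimes>\<^sub>M S)"
    and centered: "\<And>\<omega>. \<omega> \<in> space M \<Longrightarrow>
      integrable (distr M S X) (w \<omega>) \<and> (\<integral>s. w \<omega> s \<partial>distr M S X) = 0"
  shows "(\<integral>\<^sup>+\<omega>. ennreal ((norm (U \<omega> + w \<omega> (X \<omega>)))\<^sup>2) \<partial>M)
    = (\<integral>\<^sup>+\<omega>. ennreal ((norm (U \<omega>))\<^sup>2) \<partial>M)
      + (\<integral>\<^sup>+\<omega>. (\<integral>\<^sup>+s. ennreal ((norm (w \<omega> s))\<^sup>2) \<partial>distr M S X) \<partial>M)"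
proof -
  interpret Q: prob_space "distr M S X"
    by (rule prob_space_distr[OF X])
  have w_Q: "case_prod w \<in> borel_measurable (F \<Otimes>\<^sub>M distr M S X)"
    using w by (simp add: measurable_cong_sets[OF sets_pair_measure_cong[OF refl sets_distr] refl])
  have integrand: "(\<lambda>(\<omega>, s). ennreal ((norm (U \<omega> + w \<omega> s))\<^sup>2)) \<in> borel_measurable (F \<Otimes>\<^sub>M S)"
    using U w by (simp add: case_prod_beta') measurable
  have "(\<integral>\<^sup>+\<omega>. ennreal ((norm (U \<omega> + w \<omega> (X \<omega>)))\<^sup>2) \<partial>M)
      = (\<integral>\<^sup>+\<omega>. (\<integral>\<^sup>+s. ennreal ((norm (U \<omega> + w \<omega> s))\<^sup>2) \<partial>distr M S X) \<partial>M)"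
    by (rule nn_integral_indep_eval[OF sub X indep integrand])
  also have "\<dots> = (\<integral>\<^sup>+\<omega>. ennreal ((norm (U \<omega>))\<^sup>2)
      + (\<integral>\<^sup>+s. ennreal ((norm (w \<omega> s))\<^sup>2) \<partial>distr M S X) \<partial>M)"
    using centered by (intro nn_integral_cong Q.nn_integral_norm_sq_add_centered) auto
  also have "\<dots> = (\<integral>\<^sup>+\<omega>. ennreal ((norm (U \<omega>))\<^sup>2) \<partial>M)
      + (\<integral>\<^sup>+\<omega>. (\<integral>\<^sup>+s. ennreal ((norm (w \<omega> s))\<^sup>2) \<partial>distr M S X) \<partial>M)"
  proof (rule nn_integral_add)
    show "(\<lambda>\<omega>. ennreal ((norm (U \<omega>))\<^sup>2)) \<in> borel_measurable M"
      using measurable_from_subalg[OF sub U] by measurable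
    have "(\<lambda>(\<omega>, s). ennreal ((norm (w \<omega> s))\<^sup>2)) \<in> borel_measurable (F \<Otimes>\<^sub>M distr M S X)"
      using w_Q by (simp add: case_prod_beta') measurable
    then show "(\<lambda>\<omega>. \<integral>\<^sup>+s. ennreal ((norm (w \<omega> s))\<^sup>2) \<partial>distr M S X) \<in> borel_measurable M"
      by (rule measurable_from_subalg[OF sub Q.borel_measurable_nn_integral])
  qed
  finally show ?thesis .
qed

definition sigma_vars :: "'a measure \<Rightarrow> 's measure \<Rightarrow> ('k \<Rightarrow> 'a \<Rightarrow> 's) \<Rightarrow> 'k set \<Rightarrow> 'a measure" where
  "sigma_vars M S X J = sigma (space M) (\<Union>j\<in>J. {X j -` A \<inter> space M | A. A \<in> sets S})"

lemma space_sigma_vars [simp]: "space (sigma_vars M S X J) = space M"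
  unfolding sigma_vars_def by (rule space_measure_of) auto

lemma sets_sigma_vars:
  "sets (sigma_vars M S X J) = sigma_sets (space M) (\<Union>j\<in>J. {X j -` A \<inter> space M | A. A \<in> sets S})"
  unfolding sigma_vars_def by (rule sets_measure_of) auto

lemma subalgebra_sigma_vars:
  "(\<And>j. j \<in> J \<Longrightarrow> X j \<in> measurable M S) \<Longrightarrow> subalgebra M (sigma_vars M S X J)"
  unfolding subalgebra_def sets_sigma_vars by (auto intro!: sets.sigma_sets_subset measurable_sets)

lemma subalgebra_sigma_vars_mono:
  "J \<subseteq> J' \<Longrightarrow> subalgebra (sigma_vars M S X J') (sigma_vars M S X J)"
  unfolding subalgebra_def sets_sigma_vars by (auto intro!: sigma_sets_mono')

lemma measurable_sigma_vars:
  assumes "j \<in> J" "X j \<in> measurable M S"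
  shows "X j \<in> measurable (sigma_vars M S X J) S"
proof (rule measurableI)
  show "X j x \<in> space S" if "x \<in> space (sigma_vars M S X J)" for x
    using that assms(2) by (auto simp: measurable_space)
  show "X j -` A \<inter> space (sigma_vars M S X J) \<in> sets (sigma_vars M S X J)" if "A \<in> sets S" for A
    unfolding sets_sigma_vars space_sigma_vars using that assms(1) by (intro sigma_sets.Basic) blast
qed

lemma (in prob_space) indep_sigma_vars:
  assumes indep: "indep_vars (\<lambda>_. S) X I" and "J \<subseteq> I" "k \<in> I" "k \<notin> J"
    and A: "A \<in> sets (sigma_vars M S X J)" and B: "B \<in> sets S"
  shows "emeasure M (A \<inter> (X k -` B \<inter> space M)) = emeasure M A * emeasure M (X k -` B \<inter> space M)"
proof -
  define E where "E i = {X i -` A \<inter> space M | A. A \<in> sets S}" for i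
  define part where "part b = (if b then J else {k})" for b
  have "indep_sets E (\<Union>b. part b)"
    using indep assms(2-4) unfolding indep_vars_def2 E_def part_def
    by (auto intro: indep_sets_mono_index)
  then have "indep_sets (\<lambda>b. sigma_sets (space M) (\<Union>i\<in>part b. E i)) UNIV"
  proof (rule indep_sets_collect_sigma)
    show "Int_stable (E i)" for i
      unfolding E_def Int_stable_def by (auto, rule_tac x="A \<inter> Aa" in exI, auto)
    show "disjoint_family_on part UNIV"
      using assms(4) by (auto simp: disjoint_family_on_def part_def)
  qed
  moreover have "(\<lambda>b. sigma_sets (space M) (\<Union>i\<in>part b. E i))
      = case_bool (sigma_sets (space M) (\<Union>i\<in>J. E i)) (sigma_sets (space M) (E k))"
    by (auto simp: part_def fun_eq_iff split: bool.split)
  ultimately have "indep_set (sigma_sets (space M) (\<Union>i\<in>J. E i)) (sigma_sets (space M) (E k))"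
    unfolding indep_set_def by simp
  moreover have "A \<in> sigma_sets (space M) (\<Union>i\<in>J. E i)"
    using A unfolding sets_sigma_vars E_def .
  moreover have "X k -` B \<inter> space M \<in> sigma_sets (space M) (E k)"
    using B unfolding E_def by (intro sigma_sets.Basic) blast
  ultimately have "prob (A \<inter> (X k -` B \<inter> space M)) = prob A * prob (X k -` B \<inter> space M)"
    by (rule indep_setD)
  then show ?thesis
    by (simp add: emeasure_eq_measure ennreal_mult)
qed

lemma borel_measurable_sigma_vars_noise_sum:
  fixes U :: "'a \<Rightarrow> 'd::euclidean_space" and w :: "'k \<Rightarrow> 'a \<Rightarrow> 's \<Rightarrow> 'd"
  assumes X: "\<And>k. k \<in> K \<Longrightarrow> X k \<in> measurable M S"
    and U: "U \<in> borel_measurable (sigma_vars M S X J)"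
    and w: "\<And>k. k \<in> K \<Longrightarrow> case_prod (w k) \<in> borel_measurable (sigma_vars M S X J \<Otimes>\<^sub>M S)"
  shows "(\<lambda>\<omega>. U \<omega> + (\<Sum>k\<in>K. w k \<omega> (X k \<omega>))) \<in> borel_measurable (sigma_vars M S X (J \<union> K))"
proof -
  have lift: "(\<lambda>\<omega>. \<omega>) \<in> measurable (sigma_vars M S X (J \<union> K)) (sigma_vars M S X J)"
    by (rule measurable_from_subalg[OF subalgebra_sigma_vars_mono measurable_ident_sets]) auto
  have "(\<lambda>\<omega>. w k \<omega> (X k \<omega>)) \<in> borel_measurable (sigma_vars M S X (J \<union> K))" if "k \<in> K" for k
  proof -
    have "(\<lambda>\<omega>. (\<omega>, X k \<omega>)) \<in> measurable (sigma_vars M S X (J \<union> K)) (sigma_vars M S X J \<Otimes>\<^sub>M S)"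
      using lift measurable_sigma_vars[of k "J \<union> K" X, OF UnI2[OF that] X[OF that]] by measurable
    from measurable_compose[OF this w[OF that]] show ?thesis
      by simp
  qed
  then show ?thesis
    using measurable_from_subalg[OF subalgebra_sigma_vars_mono[of J "J \<union> K"] U] by measurable
qed

lemma (in prob_space) nn_integral_norm_sq_indep_noise_sum:
  fixes U :: "'a \<Rightarrow> 'd::euclidean_space" and w :: "'k \<Rightarrow> 'a \<Rightarrow> 's \<Rightarrow> 'd"
  assumes indep: "indep_vars (\<lambda>_. S) X I"
    and K: "finite K" "K \<subseteq> I" and J: "J \<subseteq> I" "J \<inter> K = {}"
    and U: "U \<in> borel_measurable (sigma_vars M S X J)"
    and w: "\<And>k. k \<in> K \<Longrightarrow> case_prod (w k) \<in> borel_measurable (sigma_vars M S X J \<Otimes>\<^sub>M S)"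
    and centered: "\<And>k \<omega>. k \<in> K \<Longrightarrow> \<omega> \<in> space M \<Longrightarrow>
      integrable (distr M S (X k)) (w k \<omega>) \<and> (\<integral>s. w k \<omega> s \<partial>distr M S (X k)) = 0"
  shows "(\<integral>\<^sup>+\<omega>. ennreal ((norm (U \<omega> + (\<Sum>k\<in>K. w k \<omega> (X k \<omega>))))\<^sup>2) \<partial>M)
    = (\<integral>\<^sup>+\<omega>. ennreal ((norm (U \<omega>))\<^sup>2) \<partial>M)
      + (\<Sum>k\<in>K. \<integral>\<^sup>+\<omega>. (\<integral>\<^sup>+s. ennreal ((norm (w k \<omega> s))\<^sup>2) \<partial>distr M S (X k)) \<partial>M)"
  using K J(2) w centered
proof (induction K rule: finite_induct)
  case (insert k K)
  have X: "X i \<in> measurable M S" if "i \<in> I" for i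
    using indep that unfolding indep_vars_def2 by auto
  let ?F = "sigma_vars M S X (J \<union> K)"
  have sub: "subalgebra M ?F"
    by (rule subalgebra_sigma_vars) (use X J insert.prems in auto)
  have "(\<lambda>\<omega>. \<omega>) \<in> measurable ?F (sigma_vars M S X J)"
    by (rule measurable_from_subalg[OF subalgebra_sigma_vars_mono measurable_ident_sets]) auto
  then have lift: "(\<lambda>p. (fst p, snd p)) \<in> measurable (?F \<Otimes>\<^sub>M S) (sigma_vars M S X J \<Otimes>\<^sub>M S)"
    by (intro measurable_Pair measurable_compose[OF measurable_fst] measurable_snd)
  have "(\<integral>\<^sup>+\<omega>. ennreal ((norm ((U \<omega> + (\<Sum>j\<in>K. w j \<omega> (X j \<omega>))) + w k \<omega> (X k \<omega>)))\<^sup>2) \<partial>M)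
     = (\<integral>\<^sup>+\<omega>. ennreal ((norm (U \<omega> + (\<Sum>j\<in>K. w j \<omega> (X j \<omega>))))\<^sup>2) \<partial>M)
      + (\<integral>\<^sup>+\<omega>. (\<integral>\<^sup>+s. ennreal ((norm (w k \<omega> s))\<^sup>2) \<partial>distr M S (X k)) \<partial>M)"
  proof (rule nn_integral_norm_sq_indep_noise[OF sub])
    show "X k \<in> measurable M S"
      using X insert.prems by auto
    show "emeasure M (A \<inter> (X k -` B \<inter> space M)) = emeasure M A * emeasure M (X k -` B \<inter> space M)"
      if "A \<in> sets ?F" "B \<in> sets S" for A B
      by (rule indep_sigma_vars[OF indep _ _ _ that]) (use J insert in auto)
    show "(\<lambda>\<omega>. U \<omega> + (\<Sum>j\<in>K. w j \<omega> (X j \<omega>))) \<in> borel_measurable ?F"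
      by (rule borel_measurable_sigma_vars_noise_sum[OF _ U]) (use X insert.prems in auto)
    show "case_prod (w k) \<in> borel_measurable (?F \<Otimes>\<^sub>M S)"
      using measurable_compose[OF lift insert.prems(3)[of k]] by simp
  qed (use insert.prems in auto)
  moreover have "(\<integral>\<^sup>+\<omega>. ennreal ((norm (U \<omega> + (\<Sum>j\<in>K. w j \<omega> (X j \<omega>))))\<^sup>2) \<partial>M)
     = (\<integral>\<^sup>+\<omega>. ennreal ((norm (U \<omega>))\<^sup>2) \<partial>M)
      + (\<Sum>j\<in>K. \<integral>\<^sup>+\<omega>. (\<integral>\<^sup>+s. ennreal ((norm (w j \<omega> s))\<^sup>2) \<partial>distr M S (X j)) \<partial>M)"
    by (rule insert.IH) (use insert.prems in auto)
  ultimately show ?case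
    using insert.hyps by (simp add: algebra_simps)
qed simp

section \<open>The D-MSSCA iteration\<close>

locale dmssca = M: prob_space M
  for M :: "'a measure" and S :: "'s measure" and P :: "nat \<Rightarrow> 's measure"
    and \<xi> :: "nat \<Rightarrow> nat \<Rightarrow> nat \<Rightarrow> 'a \<Rightarrow> 's"
    and Gf :: "nat \<Rightarrow> 'd::euclidean_space \<Rightarrow> 's \<Rightarrow> 'd" and Gu :: "nat \<Rightarrow> 'd \<Rightarrow> 'd"
    and W :: "nat \<Rightarrow> nat \<Rightarrow> real" and x xh z :: "nat \<Rightarrow> nat \<Rightarrow> 'a \<Rightarrow> 'd" and x1 :: 'd
    and n b0 :: nat and \<alpha> \<beta> L :: real and \<sigma> :: "nat \<Rightarrow> real" +
  assumes b0_pos: "b0 \<ge> 1" and beta: "0 < \<beta>" "\<beta> \<le> 1"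
    and indep: "M.indep_vars (\<lambda>_. S) (\<lambda>(i, t, r). \<xi> i t r) (sample_idx n b0)"
    and distr: "\<And>i t r. (i, t, r) \<in> sample_idx n b0 \<Longrightarrow> distr M S (\<xi> i t r) = P i"
    and Gf_meas: "\<And>i. i < n \<Longrightarrow> (\<lambda>(v, s). Gf i v s) \<in> borel_measurable (borel \<Otimes>\<^sub>M S)"
    and unbiased: "\<And>i v. i < n \<Longrightarrow> integrable (P i) (Gf i v) \<and> (\<integral>s. Gf i v s \<partial>P i) = Gu i v"
    and variance: "\<And>i v. i < n \<Longrightarrow>
      (\<integral>\<^sup>+ s. ennreal ((norm (Gf i v s - Gu i v))\<^sup>2) \<partial>P i) \<le> ennreal ((\<sigma> i)\<^sup>2)"
    and lipschitz: "\<And>i v w. i < n \<Longrightarrow>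
      (\<integral>\<^sup>+ s. ennreal ((norm (Gf i v s - Gf i w s))\<^sup>2) \<partial>P i) \<le> ennreal (L\<^sup>2 * (norm (v - w))\<^sup>2)"
    and W_nonneg: "\<And>i j. i < n \<Longrightarrow> j < n \<Longrightarrow> W i j \<ge> 0"
    and W_row: "\<And>i. i < n \<Longrightarrow> (\<Sum>j<n. W i j) = 1"
    and W_col: "\<And>j. j < n \<Longrightarrow> (\<Sum>i<n. W i j) = 1"
    and x_init: "\<And>i \<omega>. i < n \<Longrightarrow> \<omega> \<in> space M \<Longrightarrow> x i 1 \<omega> = x1"
    and z_init: "\<And>i \<omega>. i < n \<Longrightarrow> \<omega> \<in> space M \<Longrightarrow>
      z i 1 \<omega> = (1 / real b0) *\<^sub>R (\<Sum>r=1..b0. Gf i (x i 1 \<omega>) (\<xi> i 1 r \<omega>))"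
    and xh_adapted: "\<And>i t. i < n \<Longrightarrow> t \<ge> 1 \<Longrightarrow> xh i t \<in> borel_measurable (hist M S n b0 \<xi> t)"
    and x_upd: "\<And>i t \<omega>. i < n \<Longrightarrow> t \<ge> 1 \<Longrightarrow> \<omega> \<in> space M \<Longrightarrow>
      x i (t + 1) \<omega> = (\<Sum>j<n. W i j *\<^sub>R (x j t \<omega> + \<alpha> *\<^sub>R (xh j t \<omega> - x j t \<omega>)))"
    and z_upd: "\<And>i t \<omega>. i < n \<Longrightarrow> t \<ge> 1 \<Longrightarrow> \<omega> \<in> space M \<Longrightarrow>
      z i (t + 1) \<omega> = Gf i (x i (t + 1) \<omega>) (\<xi> i (t + 1) 1 \<omega>)
        + (1 - \<beta>) *\<^sub>R (z i t \<omega> - Gf i (x i t \<omega>) (\<xi> i (t + 1) 1 \<omega>))"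
begin

abbreviation sample :: "nat \<times> nat \<times> nat \<Rightarrow> 'a \<Rightarrow> 's" where
  "sample \<equiv> \<lambda>(i, t, r). \<xi> i t r"

abbreviation history :: "nat \<Rightarrow> 'a measure" where
  "history t \<equiv> hist M S n b0 \<xi> t"

definition drawn :: "nat \<Rightarrow> (nat \<times> nat \<times> nat) set" where
  "drawn t = {k \<in> sample_idx n b0. fst (snd k) \<le> t}"

lemma history_eq_sigma_vars: "history t = sigma_vars M S sample (drawn t)"
  unfolding hist_def sigma_vars_def drawn_def
  by (rule arg_cong[where f="sigma (space M)"]) (auto; blast)

lemma space_history [simp]: "space (history t) = space M"
  by (simp add: history_eq_sigma_vars)

lemma x_Suc:
  "i < n \<Longrightarrow> 1 \<le> t \<Longrightarrow> \<omega> \<in> space M \<Longrightarrow>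
    x i (Suc t) \<omega> = (\<Sum>j<n. W i j *\<^sub>R (x j t \<omega> + \<alpha> *\<^sub>R (xh j t \<omega> - x j t \<omega>)))"
  using x_upd by simp

lemma z_Suc:
  "i < n \<Longrightarrow> 1 \<le> t \<Longrightarrow> \<omega> \<in> space M \<Longrightarrow>
    z i (Suc t) \<omega> = Gf i (x i (Suc t) \<omega>) (\<xi> i (Suc t) 1 \<omega>)
      + (1 - \<beta>) *\<^sub>R (z i t \<omega> - Gf i (x i t \<omega>) (\<xi> i (Suc t) 1 \<omega>))"
  using z_upd by simp

lemma sample_measurable: "k \<in> sample_idx n b0 \<Longrightarrow> sample k \<in> measurable M S"
  using indep unfolding M.indep_vars_def2 by auto

lemma distr_sample: "k \<in> sample_idx n b0 \<Longrightarrow> distr M S (sample k) = P (fst k)"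
  using distr by (cases k) auto

lemma first_sample_idx: "i < n \<Longrightarrow> 1 \<le> r \<Longrightarrow> r \<le> b0 \<Longrightarrow> (i, 1, r) \<in> sample_idx n b0"
  by (simp add: sample_idx_def)

lemma Suc_sample_idx: "i < n \<Longrightarrow> 1 \<le> t \<Longrightarrow> (i, Suc t, 1) \<in> sample_idx n b0"
  by (simp add: sample_idx_def)

lemma P_eq_distr: "i < n \<Longrightarrow> P i = distr M S (\<xi> i 1 1)"
  using distr_sample[OF first_sample_idx[of i 1]] b0_pos by simp

lemma prob_space_P: "i < n \<Longrightarrow> prob_space (P i)"
  using P_eq_distr M.prob_space_distr sample_measurable[OF first_sample_idx[of i 1]] b0_pos by simp

lemma Gu_measurable: "i < n \<Longrightarrow> Gu i \<in> borel_measurable borel"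
proof -
  assume i: "i < n"
  interpret Q: prob_space "P i" by (rule prob_space_P[OF i])
  have "(\<lambda>(v, s). Gf i v s) \<in> borel_measurable (borel \<Otimes>\<^sub>M P i)"
    using Gf_meas[OF i] P_eq_distr[OF i]
    by (simp add: measurable_cong_sets[OF sets_pair_measure_cong[OF refl sets_distr] refl])
  then have "(\<lambda>v. \<integral>s. Gf i v s \<partial>P i) \<in> borel_measurable borel"
    by (rule Q.borel_measurable_lebesgue_integral)
  then show ?thesis
    using unbiased[OF i] by simp
qed

lemma measurable_Gf_comp:
  "i < n \<Longrightarrow> a \<in> borel_measurable N \<Longrightarrow> b \<in> measurable N S \<Longrightarrow>
    (\<lambda>\<omega>. Gf i (a \<omega>) (b \<omega>)) \<in> borel_measurable N"
  using measurable_compose[OF measurable_Pair Gf_meas] by auto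

lemma subalgebra_history: "subalgebra M (history t)"
  unfolding history_eq_sigma_vars
  by (intro subalgebra_sigma_vars sample_measurable) (simp add: drawn_def)

lemma measurable_from_history: "f \<in> borel_measurable (history t) \<Longrightarrow> f \<in> borel_measurable M"
  by (rule measurable_from_subalg[OF subalgebra_history])

lemma measurable_history_mono:
  "t \<le> t' \<Longrightarrow> f \<in> borel_measurable (history t) \<Longrightarrow> f \<in> borel_measurable (history t')"
  unfolding history_eq_sigma_vars
  by (erule measurable_from_subalg[OF subalgebra_sigma_vars_mono, rotated]) (auto simp: drawn_def)

lemma sample_measurable_history:
  assumes "(i, \<tau>, r) \<in> sample_idx n b0" "\<tau> \<le> t"
  shows "\<xi> i \<tau> r \<in> measurable (history t) S"
  using measurable_sigma_vars[of "(i, \<tau>, r)" "drawn t" sample, OF _ sample_measurable] assms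
  by (simp add: history_eq_sigma_vars drawn_def)

lemma x_Suc_measurable_step:
  assumes "1 \<le> t" "i < n" and x: "\<And>j. j < n \<Longrightarrow> x j t \<in> borel_measurable (history t)"
  shows "x i (Suc t) \<in> borel_measurable (history t)"
proof -
  have "(\<lambda>\<omega>. \<Sum>j<n. W i j *\<^sub>R (x j t \<omega> + \<alpha> *\<^sub>R (xh j t \<omega> - x j t \<omega>))) \<in> borel_measurable (history t)"
    using x xh_adapted assms(1)
    by (intro borel_measurable_sum borel_measurable_scaleR borel_measurable_add
        borel_measurable_diff borel_measurable_const) auto
  then show ?thesis
    by (rule measurable_cong[THEN iffD1, rotated]) (simp add: x_Suc[OF assms(2,1)])
qed

lemma z_Suc_measurable_step:
  assumes "1 \<le> t" "i < n"
    and "x i t \<in> borel_measurable (history (Suc t))"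
    and "x i (Suc t) \<in> borel_measurable (history (Suc t))"
    and "z i t \<in> borel_measurable (history (Suc t))"
  shows "z i (Suc t) \<in> borel_measurable (history (Suc t))"
proof -
  have "\<xi> i (Suc t) 1 \<in> measurable (history (Suc t)) S"
    using sample_measurable_history[OF Suc_sample_idx] assms by simp
  then have "(\<lambda>\<omega>. Gf i (x i (Suc t) \<omega>) (\<xi> i (Suc t) 1 \<omega>)
      + (1 - \<beta>) *\<^sub>R (z i t \<omega> - Gf i (x i t \<omega>) (\<xi> i (Suc t) 1 \<omega>)))
        \<in> borel_measurable (history (Suc t))"
    using assms by (intro borel_measurable_add borel_measurable_scaleR borel_measurable_diff
        borel_measurable_const measurable_Gf_comp)
  then show ?thesis
    by (rule measurable_cong[THEN iffD1, rotated]) (simp add: z_Suc[OF assms(2,1)])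
qed

lemma iterates_adapted:
  "1 \<le> t \<Longrightarrow> i < n \<Longrightarrow> x i t \<in> borel_measurable (history t) \<and> z i t \<in> borel_measurable (history t)"
proof (induction t arbitrary: i rule: nat_induct_at_least)
  case base
  have "\<xi> i 1 r \<in> measurable (history 1) S" if "1 \<le> r" "r \<le> b0" for r
    using sample_measurable_history[OF first_sample_idx] that base by simp
  then have "(\<lambda>\<omega>. (1 / real b0) *\<^sub>R (\<Sum>r=1..b0. Gf i x1 (\<xi> i 1 r \<omega>))) \<in> borel_measurable (history 1)"
    using base by (intro borel_measurable_scaleR borel_measurable_const borel_measurable_sum
        measurable_Gf_comp) auto
  then have "z i 1 \<in> borel_measurable (history 1)"
    by (rule measurable_cong[THEN iffD1, rotated])
      (simp add: z_init[OF base, unfolded One_nat_def] x_init[OF base, unfolded One_nat_def])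
  moreover have "x i 1 \<in> borel_measurable (history 1)"
    by (rule measurable_cong[where f="\<lambda>_. x1", THEN iffD1, rotated])
      (simp_all add: x_init[OF base, unfolded One_nat_def])
  ultimately show ?case
    by blast
next
  case (Suc t)
  have lift: "f \<in> borel_measurable (history (Suc t))" if "f \<in> borel_measurable (history t)"
    for f :: "'a \<Rightarrow> 'd"
    using measurable_history_mono[OF _ that] by simp
  have x_next: "x j (Suc t) \<in> borel_measurable (history t)" if "j < n" for j
    by (rule x_Suc_measurable_step) (use Suc.hyps Suc.IH that in auto)
  have "z i (Suc t) \<in> borel_measurable (history (Suc t))"
    using Suc.hyps Suc.prems lift[OF conjunct1[OF Suc.IH[OF Suc.prems]]]
      lift[OF x_next[OF Suc.prems]] lift[OF conjunct2[OF Suc.IH[OF Suc.prems]]]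
    by (rule z_Suc_measurable_step)
  then show ?case
    using lift[OF x_next[OF Suc.prems]] by simp
qed

lemma x_measurable: "1 \<le> t \<Longrightarrow> i < n \<Longrightarrow> x i t \<in> borel_measurable (history t)"
  by (simp add: iterates_adapted)

lemma x_Suc_measurable: "1 \<le> t \<Longrightarrow> i < n \<Longrightarrow> x i (Suc t) \<in> borel_measurable (history t)"
  by (rule x_Suc_measurable_step) (simp_all add: x_measurable)

lemma z_measurable: "1 \<le> t \<Longrightarrow> i < n \<Longrightarrow> z i t \<in> borel_measurable (history t)"
  by (simp add: iterates_adapted)

definition err :: "nat \<Rightarrow> nat \<Rightarrow> 'a \<Rightarrow> 'd" where
  "err i t \<omega> = z i t \<omega> - Gu i (x i t \<omega>)"

definition noise :: "nat \<Rightarrow> nat \<Rightarrow> 'a \<Rightarrow> 's \<Rightarrow> 'd" where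
  "noise i t \<omega> s = (Gf i (x i (Suc t) \<omega>) s - Gu i (x i (Suc t) \<omega>))
    - (1 - \<beta>) *\<^sub>R (Gf i (x i t \<omega>) s - Gu i (x i t \<omega>))"

lemma err_Suc:
  "i < n \<Longrightarrow> 1 \<le> t \<Longrightarrow> \<omega> \<in> space M \<Longrightarrow>
    err i (Suc t) \<omega> = (1 - \<beta>) *\<^sub>R err i t \<omega> + noise i t \<omega> (\<xi> i (Suc t) 1 \<omega>)"
  using z_Suc[of i t \<omega>] by (simp add: err_def noise_def algebra_simps)

lemma err_first:
  assumes "i < n" "\<omega> \<in> space M"
  shows "err i 1 \<omega> = (\<Sum>r=1..b0. (1 / real b0) *\<^sub>R (Gf i x1 (\<xi> i 1 r \<omega>) - Gu i x1))"
proof -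
  have "(\<Sum>r=1..b0. (1 / real b0) *\<^sub>R (Gf i x1 (\<xi> i 1 r \<omega>) - Gu i x1))
      = (1 / real b0) *\<^sub>R (\<Sum>r=1..b0. Gf i x1 (\<xi> i 1 r \<omega>)) - Gu i x1"
    using b0_pos by (simp add: scaleR_diff_right sum_subtractf scaleR_sum_right[symmetric]
        sum_constant_scaleR)
  then show ?thesis
    using z_init[OF assms] x_init[OF assms] by (simp add: err_def)
qed

lemma err_measurable: "i < n \<Longrightarrow> 1 \<le> t \<Longrightarrow> err i t \<in> borel_measurable (history t)"
  unfolding err_def[abs_def]
  by (intro borel_measurable_diff z_measurable measurable_compose[OF x_measurable Gu_measurable])

lemma noise_measurable:
  assumes "i < n" "1 \<le> t"
  shows "case_prod (noise i t) \<in> borel_measurable (history t \<Otimes>\<^sub>M S)"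
proof -
  have "(\<lambda>p. x i t (fst p)) \<in> borel_measurable (history t \<Otimes>\<^sub>M S)"
    "(\<lambda>p. x i (Suc t) (fst p)) \<in> borel_measurable (history t \<Otimes>\<^sub>M S)"
    using measurable_compose[OF measurable_fst x_measurable[OF assms(2,1)]]
      measurable_compose[OF measurable_fst x_Suc_measurable[OF assms(2,1)]] by auto
  then have "(\<lambda>p. noise i t (fst p) (snd p)) \<in> borel_measurable (history t \<Otimes>\<^sub>M S)"
    unfolding noise_def using assms
    by (intro borel_measurable_diff borel_measurable_scaleR borel_measurable_const
        measurable_Gf_comp measurable_compose[OF _ Gu_measurable] measurable_snd)
  then show ?thesis
    by (simp add: case_prod_beta')
qed

lemma noise_centered: "i < n \<Longrightarrow> integrable (P i) (noise i t \<omega>) \<and> (\<integral>s. noise i t \<omega> s \<partial>P i) = 0"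
  unfolding noise_def[abs_def]
  by (rule prob_space.momentum_noise_centered[where G="Gf i" and g="Gu i", OF prob_space_P])
    (use unbiased in auto)

lemma noise_sq_le:
  "i < n \<Longrightarrow> (\<integral>\<^sup>+s. ennreal ((norm (noise i t \<omega> s))\<^sup>2) \<partial>P i)
    \<le> ennreal (2 * \<beta>\<^sup>2 * (\<sigma> i)\<^sup>2) + ennreal (2 * L\<^sup>2 * (norm (x i (Suc t) \<omega> - x i t \<omega>))\<^sup>2)"
  unfolding noise_def
  by (rule prob_space.momentum_noise_sq_le[where G="Gf i" and g="Gu i", OF prob_space_P])
    (use unbiased variance lipschitz beta in auto)

text \<open>The samples \<open>\<xi> i (t + 1) 1\<close> are independent of the history up to time \<open>t\<close>, so the second
  moments of centred functions of them add up.\<close>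
lemma nn_integral_norm_sq_fresh_noise:
  fixes w :: "nat \<Rightarrow> 'a \<Rightarrow> 's \<Rightarrow> 'd"
  assumes N: "N \<subseteq> {..<n}" and t: "1 \<le> t"
    and U: "U \<in> borel_measurable (history t)"
    and w: "\<And>i. i \<in> N \<Longrightarrow> case_prod (w i) \<in> borel_measurable (history t \<Otimes>\<^sub>M S)"
    and centered: "\<And>i \<omega>. i \<in> N \<Longrightarrow> integrable (P i) (w i \<omega>) \<and> (\<integral>s. w i \<omega> s \<partial>P i) = 0"
  shows "(\<integral>\<^sup>+\<omega>. ennreal ((norm (U \<omega> + (\<Sum>i\<in>N. w i \<omega> (\<xi> i (Suc t) 1 \<omega>))))\<^sup>2) \<partial>M)
    = (\<integral>\<^sup>+\<omega>. ennreal ((norm (U \<omega>))\<^sup>2) \<partial>M)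
      + (\<Sum>i\<in>N. \<integral>\<^sup>+\<omega>. (\<integral>\<^sup>+s. ennreal ((norm (w i \<omega> s))\<^sup>2) \<partial>P i) \<partial>M)"
proof -
  define K where "K = (\<lambda>i. (i, Suc t, 1::nat)) ` N"
  have inj: "inj_on (\<lambda>i. (i, Suc t, 1::nat)) N"
    by (auto simp: inj_on_def)
  have distr_K: "distr M S (sample k) = P (fst k)" if "k \<in> K" for k
    using that N t distr_sample[OF Suc_sample_idx] by (auto simp: K_def)
  have "(\<integral>\<^sup>+\<omega>. ennreal ((norm (U \<omega> + (\<Sum>k\<in>K. w (fst k) \<omega> (sample k \<omega>))))\<^sup>2) \<partial>M)
      = (\<integral>\<^sup>+\<omega>. ennreal ((norm (U \<omega>))\<^sup>2) \<partial>M)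
        + (\<Sum>k\<in>K. \<integral>\<^sup>+\<omega>. (\<integral>\<^sup>+s. ennreal ((norm (w (fst k) \<omega> s))\<^sup>2) \<partial>distr M S (sample k)) \<partial>M)"
  proof (rule M.nn_integral_norm_sq_indep_noise_sum
      [OF indep, where J="drawn t" and w="\<lambda>k. w (fst k)"])
    show "U \<in> borel_measurable (sigma_vars M S sample (drawn t))"
      using U by (simp add: history_eq_sigma_vars)
    show "case_prod (w (fst k)) \<in> borel_measurable (sigma_vars M S sample (drawn t) \<Otimes>\<^sub>M S)"
      if "k \<in> K" for k
      using that w by (auto simp: K_def history_eq_sigma_vars)
    show "integrable (distr M S (sample k)) (w (fst k) \<omega>)
        \<and> (\<integral>s. w (fst k) \<omega> s \<partial>distr M S (sample k)) = 0"
      if "k \<in> K" for k \<omega>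
      using that centered by (auto simp: distr_K K_def)
  qed (use N t finite_subset[OF N] in \<open>auto simp: K_def drawn_def sample_idx_def\<close>)
  moreover have "(\<Sum>i\<in>N. \<integral>\<^sup>+\<omega>. (\<integral>\<^sup>+s. ennreal ((norm (w i \<omega> s))\<^sup>2) \<partial>distr M S (\<xi> i (Suc t) 1)) \<partial>M)
      = (\<Sum>i\<in>N. \<integral>\<^sup>+\<omega>. (\<integral>\<^sup>+s. ennreal ((norm (w i \<omega> s))\<^sup>2) \<partial>P i) \<partial>M)"
    using N t distr_sample[OF Suc_sample_idx] by (intro sum.cong) auto
  ultimately show ?thesis
    unfolding K_def sum.reindex[OF inj] by simp
qed

lemma err_sum_Suc_le:
  assumes N: "N \<subseteq> {..<n}" and t: "1 \<le> t"
  shows "(\<integral>\<^sup>+\<omega>. ennreal ((norm (c *\<^sub>R (\<Sum>i\<in>N. err i (Suc t) \<omega>)))\<^sup>2) \<partial>M)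
    \<le> ennreal (1 - \<beta>) * (\<integral>\<^sup>+\<omega>. ennreal ((norm (c *\<^sub>R (\<Sum>i\<in>N. err i t \<omega>)))\<^sup>2) \<partial>M)
      + (\<Sum>i\<in>N. \<integral>\<^sup>+\<omega>. (\<integral>\<^sup>+s. ennreal ((norm (c *\<^sub>R noise i t \<omega> s))\<^sup>2) \<partial>P i) \<partial>M)"
proof -
  define U where "U \<omega> = c *\<^sub>R (\<Sum>i\<in>N. err i t \<omega>)" for \<omega>
  have U: "U \<in> borel_measurable (history t)"
    unfolding U_def using N t by (intro borel_measurable_scaleR borel_measurable_const
        borel_measurable_sum err_measurable) auto
  have "c *\<^sub>R (\<Sum>i\<in>N. err i (Suc t) \<omega>)
      = (1 - \<beta>) *\<^sub>R U \<omega> + (\<Sum>i\<in>N. c *\<^sub>R noise i t \<omega> (\<xi> i (Suc t) 1 \<omega>))" if "\<omega> \<in> space M" for \<omega>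
    using N t that
    by (simp add: U_def err_Suc subset_eq sum.distrib scaleR_add_right scaleR_sum_right mult.commute
        cong: sum.cong)
  then have "(\<integral>\<^sup>+\<omega>. ennreal ((norm (c *\<^sub>R (\<Sum>i\<in>N. err i (Suc t) \<omega>)))\<^sup>2) \<partial>M)
      = (\<integral>\<^sup>+\<omega>. ennreal ((norm ((1 - \<beta>) *\<^sub>R U \<omega>
          + (\<Sum>i\<in>N. c *\<^sub>R noise i t \<omega> (\<xi> i (Suc t) 1 \<omega>))))\<^sup>2) \<partial>M)"
    by (intro nn_integral_cong) simp
  also have "\<dots> = (\<integral>\<^sup>+\<omega>. ennreal ((norm ((1 - \<beta>) *\<^sub>R U \<omega>))\<^sup>2) \<partial>M)
      + (\<Sum>i\<in>N. \<integral>\<^sup>+\<omega>. (\<integral>\<^sup>+s. ennreal ((norm (c *\<^sub>R noise i t \<omega> s))\<^sup>2) \<partial>P i) \<partial>M)"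
    using N t U noise_measurable noise_centered
    by (intro nn_integral_norm_sq_fresh_noise)
      (auto simp: case_prod_beta' subset_eq intro!: borel_measurable_scaleR)
  also have "(\<integral>\<^sup>+\<omega>. ennreal ((norm ((1 - \<beta>) *\<^sub>R U \<omega>))\<^sup>2) \<partial>M)
      \<le> ennreal (1 - \<beta>) * (\<integral>\<^sup>+\<omega>. ennreal ((norm (U \<omega>))\<^sup>2) \<partial>M)"
  proof -
    have "(1 - \<beta>)\<^sup>2 \<le> 1 - \<beta>"
      using beta by (simp add: power2_eq_square mult_left_le_one_le)
    then show ?thesis
      unfolding nn_integral_norm_sq_scaleR[OF measurable_from_history[OF U]]
      by (intro mult_right_mono ennreal_leI) auto
  qed
  finally show ?thesis
    by (simp add: U_def add_right_mono)
qed

lemma first_noise_sq_le: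
  assumes "i < n"
  shows "(\<integral>\<^sup>+\<omega>. (\<integral>\<^sup>+s. ennreal ((norm (a *\<^sub>R (Gf i x1 s - Gu i x1)))\<^sup>2) \<partial>P i) \<partial>M)
    \<le> ennreal (a\<^sup>2 * (\<sigma> i)\<^sup>2)"
proof -
  have "Gf i x1 \<in> borel_measurable (P i)"
    using unbiased[OF assms, of x1] borel_measurable_integrable by blast
  then have meas: "(\<lambda>s. Gf i x1 s - Gu i x1) \<in> borel_measurable (P i)"
    by measurable
  then have "(\<integral>\<^sup>+s. ennreal ((norm (a *\<^sub>R (Gf i x1 s - Gu i x1)))\<^sup>2) \<partial>P i)
      \<le> ennreal (a\<^sup>2) * ennreal ((\<sigma> i)\<^sup>2)"
    unfolding nn_integral_norm_sq_scaleR[OF meas]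
    by (intro mult_left_mono variance assms) auto
  then show ?thesis
    by (simp add: M.emeasure_space_1 ennreal_mult)
qed

lemma first_batch_sq_le:
  assumes B: "B \<subseteq> {..<n} \<times> {1..b0}"
  shows "(\<integral>\<^sup>+\<omega>. ennreal ((norm (\<Sum>(i, r)\<in>B. a *\<^sub>R (Gf i x1 (\<xi> i 1 r \<omega>) - Gu i x1)))\<^sup>2) \<partial>M)
    \<le> ennreal (a\<^sup>2 * (\<Sum>(i, r)\<in>B. (\<sigma> i)\<^sup>2))"
proof -
  define K where "K = (\<lambda>(i, r). (i, 1::nat, r)) ` B"
  have inj: "inj_on (\<lambda>(i, r). (i, 1::nat, r)) B"
    by (auto simp: inj_on_def)
  have K_idx: "K \<subseteq> sample_idx n b0"
    using B by (auto simp: K_def sample_idx_def)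
  have K_node: "fst k < n" if "k \<in> K" for k
    using that B by (auto simp: K_def)
  define w where "w k \<omega> s = a *\<^sub>R (Gf (fst k) x1 s - Gu (fst k) x1)"
    for k :: "nat \<times> nat \<times> nat" and \<omega> :: 'a and s
  have "(\<integral>\<^sup>+\<omega>. ennreal ((norm (0 + (\<Sum>k\<in>K. w k \<omega> (sample k \<omega>))))\<^sup>2) \<partial>M)
      = (\<integral>\<^sup>+\<omega>. ennreal ((norm (0::'d))\<^sup>2) \<partial>M)
        + (\<Sum>k\<in>K. \<integral>\<^sup>+\<omega>. (\<integral>\<^sup>+s. ennreal ((norm (w k \<omega> s))\<^sup>2) \<partial>distr M S (sample k)) \<partial>M)"
  proof (rule M.nn_integral_norm_sq_indep_noise_sum[OF indep, where J="{}" and U="\<lambda>_. 0"])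
    show "case_prod (w k) \<in> borel_measurable (sigma_vars M S sample {} \<Otimes>\<^sub>M S)" if "k \<in> K" for k
      using K_node[OF that] by (auto simp: w_def case_prod_beta' intro!: borel_measurable_scaleR
          borel_measurable_diff measurable_Gf_comp[where a="\<lambda>_. x1"] measurable_snd)
    show "integrable (distr M S (sample k)) (w k \<omega>) \<and> (\<integral>s. w k \<omega> s \<partial>distr M S (sample k)) = 0"
      if "k \<in> K" for k \<omega>
    proof -
      interpret Q: prob_space "P (fst k)"
        by (rule prob_space_P[OF K_node[OF that]])
      show ?thesis
        using unbiased[OF K_node[OF that], of x1] distr_sample[OF subsetD[OF K_idx that]]
        by (simp add: w_def[abs_def] Q.prob_space)
    qed
  qed (use K_idx finite_subset[OF B] in \<open>auto simp: K_def\<close>)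
  also have "\<dots> = (\<Sum>k\<in>K. \<integral>\<^sup>+\<omega>. (\<integral>\<^sup>+s. ennreal ((norm (w k \<omega> s))\<^sup>2) \<partial>P (fst k)) \<partial>M)"
    using distr_sample[OF subsetD[OF K_idx]] by simp
  also have "\<dots> \<le> (\<Sum>k\<in>K. ennreal (a\<^sup>2 * (\<sigma> (fst k))\<^sup>2))"
    unfolding w_def by (intro sum_mono first_noise_sq_le K_node)
  finally show ?thesis
    unfolding K_def sum.reindex[OF inj]
    by (simp add: w_def comp_def split_beta sum_distrib_left)
qed

text \<open>The initial mini-batch averages \<open>b0\<close> independent samples per node.\<close>
lemma err_sum_first_le:
  assumes N: "N \<subseteq> {..<n}"
  shows "(\<integral>\<^sup>+\<omega>. ennreal ((norm (c *\<^sub>R (\<Sum>i\<in>N. err i 1 \<omega>)))\<^sup>2) \<partial>M)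
    \<le> ennreal (c\<^sup>2 * (\<Sum>i\<in>N. (\<sigma> i)\<^sup>2) / real b0)"
proof -
  define a where "a = c / real b0"
  have "c *\<^sub>R (\<Sum>i\<in>N. err i 1 \<omega>) = (\<Sum>(i, r)\<in>N \<times> {1..b0}. a *\<^sub>R (Gf i x1 (\<xi> i 1 r \<omega>) - Gu i x1))"
    if "\<omega> \<in> space M" for \<omega>
    using N that
    by (simp add: err_first[unfolded One_nat_def] subset_eq sum.cartesian_product[symmetric]
        scaleR_sum_right a_def)
  then have "(\<integral>\<^sup>+\<omega>. ennreal ((norm (c *\<^sub>R (\<Sum>i\<in>N. err i 1 \<omega>)))\<^sup>2) \<partial>M)
      \<le> ennreal (a\<^sup>2 * (\<Sum>(i, r)\<in>N \<times> {1..b0}. (\<sigma> i)\<^sup>2))"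
    using first_batch_sq_le[of "N \<times> {1..b0}" a] N by (auto cong: nn_integral_cong)
  also have "\<dots> = ennreal (c\<^sup>2 * (\<Sum>i\<in>N. (\<sigma> i)\<^sup>2) / real b0)"
    using b0_pos by (simp add: a_def sum.cartesian_product[symmetric] sum_distrib_left power_divide
        power2_eq_square sum_divide_distrib mult.assoc)
  finally show ?thesis .
qed

text \<open>The quantities \<open>\<upsilon>\<^sup>t\<close>, \<open>\<phi>\<^sup>t\<close>, \<open>E \<parallel>\<delta>\<^sup>t\<parallel>\<^sup>2\<close> and \<open>E (\<theta>\<^sup>t)\<^sup>2\<close> of the paper.\<close>

definition grad_err :: "nat \<Rightarrow> ennreal" where
  "grad_err t = (\<integral>\<^sup>+\<omega>. ennreal ((stk_norm n (\<lambda>i. z i t \<omega> - Gu i (x i t \<omega>)))\<^sup>2) \<partial>M)"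

definition grad_err_avg :: "nat \<Rightarrow> ennreal" where
  "grad_err_avg t =
    (\<integral>\<^sup>+\<omega>. ennreal ((norm (avg n (\<lambda>i. z i t \<omega>) - avg n (\<lambda>i. Gu i (x i t \<omega>))))\<^sup>2) \<partial>M)"

definition dir_sq :: "nat \<Rightarrow> ennreal" where
  "dir_sq t = (\<integral>\<^sup>+\<omega>. ennreal ((stk_norm n (\<lambda>i. xh i t \<omega> - x i t \<omega>))\<^sup>2) \<partial>M)"

definition consensus_sq :: "nat \<Rightarrow> ennreal" where
  "consensus_sq t = (\<integral>\<^sup>+\<omega>. ennreal ((stk_norm n (\<lambda>i. x i t \<omega> - avg n (\<lambda>j. x j t \<omega>)))\<^sup>2) \<partial>M)"

lemma grad_err_eq:
  assumes "1 \<le> t"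
  shows "grad_err t = (\<Sum>i<n. \<integral>\<^sup>+\<omega>. ennreal ((norm (err i t \<omega>))\<^sup>2) \<partial>M)"
  unfolding grad_err_def err_def[symmetric]
  by (intro nn_integral_stk_norm_sq measurable_from_history[OF err_measurable]) (use assms in auto)

lemma grad_err_avg_eq:
  "grad_err_avg t = (\<integral>\<^sup>+\<omega>. ennreal ((norm ((1 / real n) *\<^sub>R (\<Sum>i<n. err i t \<omega>)))\<^sup>2) \<partial>M)"
  unfolding grad_err_avg_def avg_def err_def by (simp add: sum_subtractf scaleR_diff_right)

lemma iterate_step_sq_le:
  assumes t: "1 \<le> t"
  shows "(\<Sum>i<n. \<integral>\<^sup>+\<omega>. ennreal ((norm (x i (Suc t) \<omega> - x i t \<omega>))\<^sup>2) \<partial>M)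
    \<le> ennreal (3 * \<alpha>\<^sup>2) * dir_sq t + 6 * consensus_sq t"
proof -
  have x: "x i t \<in> borel_measurable M" "x i (Suc t) \<in> borel_measurable M"
    "xh i t \<in> borel_measurable M"
    if "i < n" for i
    using measurable_from_history[OF x_measurable[OF t that]]
      measurable_from_history[OF x_Suc_measurable[OF t that]]
      measurable_from_history[OF xh_adapted[OF that t]] by auto
  let ?step = "\<lambda>\<omega>. stk_norm n (\<lambda>i. x i (Suc t) \<omega> - x i t \<omega>)"
  let ?dir = "\<lambda>\<omega>. stk_norm n (\<lambda>i. xh i t \<omega> - x i t \<omega>)"
  let ?cons = "\<lambda>\<omega>. stk_norm n (\<lambda>i. x i t \<omega> - avg n (\<lambda>j. x j t \<omega>))"
  have "(\<Sum>i<n. \<integral>\<^sup>+\<omega>. ennreal ((norm (x i (Suc t) \<omega> - x i t \<omega>))\<^sup>2) \<partial>M)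
      = (\<integral>\<^sup>+\<omega>. ennreal ((?step \<omega>)\<^sup>2) \<partial>M)"
    using x by (intro nn_integral_stk_norm_sq[symmetric]) auto
  also have "\<dots> \<le> (\<integral>\<^sup>+\<omega>. ennreal (3 * \<alpha>\<^sup>2) * ennreal ((?dir \<omega>)\<^sup>2)
      + 6 * ennreal ((?cons \<omega>)\<^sup>2) \<partial>M)"
  proof (rule nn_integral_mono)
    fix \<omega> assume "\<omega> \<in> space M"
    then have "(?step \<omega>)\<^sup>2 \<le> 3 * \<alpha>\<^sup>2 * (?dir \<omega>)\<^sup>2 + 6 * (?cons \<omega>)\<^sup>2"
      unfolding stk_norm_sq
      by (intro mixing_step_norm_sq_le[OF W_nonneg W_row W_col])
        (use x_Suc[OF _ t \<open>\<omega> \<in> space M\<close>] in auto)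
    then have "ennreal ((?step \<omega>)\<^sup>2) \<le> ennreal (3 * \<alpha>\<^sup>2 * (?dir \<omega>)\<^sup>2 + 6 * (?cons \<omega>)\<^sup>2)"
      by (rule ennreal_leI)
    also have "\<dots> = ennreal (3 * \<alpha>\<^sup>2) * ennreal ((?dir \<omega>)\<^sup>2) + 6 * ennreal ((?cons \<omega>)\<^sup>2)"
      by (simp add: ennreal_plus ennreal_mult)
    finally show "ennreal ((?step \<omega>)\<^sup>2)
        \<le> ennreal (3 * \<alpha>\<^sup>2) * ennreal ((?dir \<omega>)\<^sup>2) + 6 * ennreal ((?cons \<omega>)\<^sup>2)" .
  qed
  also have "\<dots> = ennreal (3 * \<alpha>\<^sup>2) * dir_sq t + 6 * consensus_sq t"
    unfolding dir_sq_def consensus_sq_def stk_norm_sq avg_def using x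
    by (simp add: nn_integral_add nn_integral_cmult)
  finally show ?thesis .
qed

lemma noise_sq_integral_le:
  assumes "i < n" "1 \<le> t"
  shows "(\<integral>\<^sup>+\<omega>. (\<integral>\<^sup>+s. ennreal ((norm (c *\<^sub>R noise i t \<omega> s))\<^sup>2) \<partial>P i) \<partial>M)
    \<le> ennreal (c\<^sup>2 * (2 * \<beta>\<^sup>2 * (\<sigma> i)\<^sup>2))
      + ennreal (c\<^sup>2 * (2 * L\<^sup>2)) * (\<integral>\<^sup>+\<omega>. ennreal ((norm (x i (Suc t) \<omega> - x i t \<omega>))\<^sup>2) \<partial>M)"
proof -
  have "(\<integral>\<^sup>+s. ennreal ((norm (c *\<^sub>R noise i t \<omega> s))\<^sup>2) \<partial>P i)
      \<le> ennreal (c\<^sup>2 * (2 * \<beta>\<^sup>2 * (\<sigma> i)\<^sup>2))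
        + ennreal (c\<^sup>2 * (2 * L\<^sup>2)) * ennreal ((norm (x i (Suc t) \<omega> - x i t \<omega>))\<^sup>2)" for \<omega>
  proof -
    have meas: "noise i t \<omega> \<in> borel_measurable (P i)"
      using noise_centered[OF assms(1), of t \<omega>] borel_measurable_integrable by blast
    have "(\<integral>\<^sup>+s. ennreal ((norm (c *\<^sub>R noise i t \<omega> s))\<^sup>2) \<partial>P i)
        \<le> ennreal (c\<^sup>2) * (ennreal (2 * \<beta>\<^sup>2 * (\<sigma> i)\<^sup>2)
          + ennreal (2 * L\<^sup>2 * (norm (x i (Suc t) \<omega> - x i t \<omega>))\<^sup>2))"
      unfolding nn_integral_norm_sq_scaleR[OF meas] by (intro mult_left_mono noise_sq_le assms) auto
    then show ?thesis
      by (simp add: distrib_left mult.assoc flip: ennreal_mult)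
  qed
  then have "(\<integral>\<^sup>+\<omega>. (\<integral>\<^sup>+s. ennreal ((norm (c *\<^sub>R noise i t \<omega> s))\<^sup>2) \<partial>P i) \<partial>M)
      \<le> (\<integral>\<^sup>+\<omega>. ennreal (c\<^sup>2 * (2 * \<beta>\<^sup>2 * (\<sigma> i)\<^sup>2))
        + ennreal (c\<^sup>2 * (2 * L\<^sup>2)) * ennreal ((norm (x i (Suc t) \<omega> - x i t \<omega>))\<^sup>2) \<partial>M)"
    by (intro nn_integral_mono)
  also have "\<dots> = ennreal (c\<^sup>2 * (2 * \<beta>\<^sup>2 * (\<sigma> i)\<^sup>2))
      + ennreal (c\<^sup>2 * (2 * L\<^sup>2)) * (\<integral>\<^sup>+\<omega>. ennreal ((norm (x i (Suc t) \<omega> - x i t \<omega>))\<^sup>2) \<partial>M)"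
    using assms measurable_from_history[OF x_measurable]
      measurable_from_history[OF x_Suc_measurable]
    by (simp add: nn_integral_add nn_integral_cmult M.emeasure_space_1)
  finally show ?thesis .
qed

lemma noise_sum_le:
  assumes "1 \<le> t"
  shows "(\<Sum>i<n. \<integral>\<^sup>+\<omega>. (\<integral>\<^sup>+s. ennreal ((norm (c *\<^sub>R noise i t \<omega> s))\<^sup>2) \<partial>P i) \<partial>M)
    \<le> ennreal (c\<^sup>2 * (2 * \<beta>\<^sup>2 * (\<Sum>i<n. (\<sigma> i)\<^sup>2))) + ennreal (c\<^sup>2 * (6 * L\<^sup>2 * \<alpha>\<^sup>2)) * dir_sq t
      + ennreal (c\<^sup>2 * (12 * L\<^sup>2)) * consensus_sq t"
proof -
  have "(\<Sum>i<n. \<integral>\<^sup>+\<omega>. (\<integral>\<^sup>+s. ennreal ((norm (c *\<^sub>R noise i t \<omega> s))\<^sup>2) \<partial>P i) \<partial>M)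
      \<le> (\<Sum>i<n. ennreal (c\<^sup>2 * (2 * \<beta>\<^sup>2 * (\<sigma> i)\<^sup>2))
        + ennreal (c\<^sup>2 * (2 * L\<^sup>2)) * (\<integral>\<^sup>+\<omega>. ennreal ((norm (x i (Suc t) \<omega> - x i t \<omega>))\<^sup>2) \<partial>M))"
    using assms by (intro sum_mono noise_sq_integral_le) auto
  also have "\<dots> = ennreal (c\<^sup>2 * (2 * \<beta>\<^sup>2 * (\<Sum>i<n. (\<sigma> i)\<^sup>2))) + ennreal (c\<^sup>2 * (2 * L\<^sup>2))
      * (\<Sum>i<n. \<integral>\<^sup>+\<omega>. ennreal ((norm (x i (Suc t) \<omega> - x i t \<omega>))\<^sup>2) \<partial>M)"
    by (simp add: sum.distrib sum_distrib_left)
  also have "\<dots> \<le> ennreal (c\<^sup>2 * (2 * \<beta>\<^sup>2 * (\<Sum>i<n. (\<sigma> i)\<^sup>2)))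
      + ennreal (c\<^sup>2 * (2 * L\<^sup>2)) * (ennreal (3 * \<alpha>\<^sup>2) * dir_sq t + 6 * consensus_sq t)"
    using assms by (intro add_left_mono mult_left_mono iterate_step_sq_le) auto
  also have "\<dots> = ennreal (c\<^sup>2 * (2 * \<beta>\<^sup>2 * (\<Sum>i<n. (\<sigma> i)\<^sup>2)))
      + ennreal (c\<^sup>2 * (6 * L\<^sup>2 * \<alpha>\<^sup>2)) * dir_sq t + ennreal (c\<^sup>2 * (12 * L\<^sup>2)) * consensus_sq t"
  proof -
    have "ennreal (c\<^sup>2 * (2 * L\<^sup>2)) * ennreal (3 * \<alpha>\<^sup>2) = ennreal (c\<^sup>2 * (6 * L\<^sup>2 * \<alpha>\<^sup>2))"
      by (simp add: ennreal_mult'[symmetric] mult_ac)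
    moreover have "ennreal (c\<^sup>2 * (2 * L\<^sup>2)) * 6 = ennreal (c\<^sup>2 * (12 * L\<^sup>2))"
      by (simp add: ennreal_mult'[symmetric] mult_ac flip: ennreal_numeral)
    ultimately show ?thesis
      by (simp add: distrib_left mult.assoc[symmetric] add.assoc)
  qed
  finally show ?thesis .
qed

lemma grad_err_Suc_le:
  assumes t: "1 \<le> t"
  shows "grad_err (Suc t) \<le> ennreal (1 - \<beta>) * grad_err t + (ennreal (2 * \<beta>\<^sup>2 * (\<Sum>i<n. (\<sigma> i)\<^sup>2))
    + ennreal (6 * L\<^sup>2 * \<alpha>\<^sup>2) * dir_sq t + ennreal (12 * L\<^sup>2) * consensus_sq t)"
proof -
  have "grad_err (Suc t) \<le> (\<Sum>i<n. ennreal (1 - \<beta>) * (\<integral>\<^sup>+\<omega>. ennreal ((norm (err i t \<omega>))\<^sup>2) \<partial>M)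
      + (\<integral>\<^sup>+\<omega>. (\<integral>\<^sup>+s. ennreal ((norm (1 *\<^sub>R noise i t \<omega> s))\<^sup>2) \<partial>P i) \<partial>M))"
    unfolding grad_err_eq[OF le_SucI[OF t]]
  proof (intro sum_mono)
    fix i assume "i \<in> {..<n}"
    then show "(\<integral>\<^sup>+\<omega>. ennreal ((norm (err i (Suc t) \<omega>))\<^sup>2) \<partial>M)
        \<le> ennreal (1 - \<beta>) * (\<integral>\<^sup>+\<omega>. ennreal ((norm (err i t \<omega>))\<^sup>2) \<partial>M)
          + (\<integral>\<^sup>+\<omega>. (\<integral>\<^sup>+s. ennreal ((norm (1 *\<^sub>R noise i t \<omega> s))\<^sup>2) \<partial>P i) \<partial>M)"
      using err_sum_Suc_le[of "{i}" t 1] t by simp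
  qed
  also have "\<dots> = ennreal (1 - \<beta>) * grad_err t
      + (\<Sum>i<n. \<integral>\<^sup>+\<omega>. (\<integral>\<^sup>+s. ennreal ((norm (1 *\<^sub>R noise i t \<omega> s))\<^sup>2) \<partial>P i) \<partial>M)"
    by (simp add: grad_err_eq[OF t] sum.distrib sum_distrib_left)
  also have "\<dots> \<le> ennreal (1 - \<beta>) * grad_err t + (ennreal (2 * \<beta>\<^sup>2 * (\<Sum>i<n. (\<sigma> i)\<^sup>2))
      + ennreal (6 * L\<^sup>2 * \<alpha>\<^sup>2) * dir_sq t + ennreal (12 * L\<^sup>2) * consensus_sq t)"
    using noise_sum_le[OF t, of 1] by (intro add_left_mono) simp
  finally show ?thesis .
qed

lemma grad_err_avg_Suc_le:
  assumes t: "1 \<le> t"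
  shows "grad_err_avg (Suc t) \<le> ennreal (1 - \<beta>) * grad_err_avg t
    + (ennreal ((1 / real n)\<^sup>2 * (2 * \<beta>\<^sup>2 * (\<Sum>i<n. (\<sigma> i)\<^sup>2)))
      + ennreal ((1 / real n)\<^sup>2 * (6 * L\<^sup>2 * \<alpha>\<^sup>2)) * dir_sq t
      + ennreal ((1 / real n)\<^sup>2 * (12 * L\<^sup>2)) * consensus_sq t)"
  unfolding grad_err_avg_eq
  using err_sum_Suc_le[of "{..<n}" t "1 / real n"] noise_sum_le[OF t, of "1 / real n"] t
  by (auto intro: order_trans add_left_mono)

lemma grad_err_first_le: "grad_err 1 \<le> ennreal ((\<Sum>i<n. (\<sigma> i)\<^sup>2) / real b0)"
proof -
  have "grad_err 1 \<le> (\<Sum>i<n. ennreal ((\<sigma> i)\<^sup>2 / real b0))"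
    unfolding grad_err_eq[OF order_refl] using err_sum_first_le[of "{_}" 1] by (intro sum_mono) simp
  then show ?thesis
    by (simp add: sum_divide_distrib)
qed

lemma grad_err_avg_first_le: "grad_err_avg 1 \<le> ennreal ((\<Sum>i<n. (\<sigma> i)\<^sup>2) / ((real n)\<^sup>2 * real b0))"
  unfolding grad_err_avg_eq using err_sum_first_le[of "{..<n}" "1 / real n"]
  by (simp add: power_divide)

lemma grad_err_sum_le:
  "(\<Sum>t=1..T. grad_err t) \<le> ennreal ((\<Sum>i<n. (\<sigma> i)\<^sup>2) / (real b0 * \<beta>))
    + ennreal (2 * \<beta> * (\<Sum>i<n. (\<sigma> i)\<^sup>2) * real T)
    + ennreal (6 * L\<^sup>2 * \<alpha>\<^sup>2 / \<beta>) * (\<Sum>t=1..T-1. dir_sq t)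
    + ennreal (12 * L\<^sup>2 / \<beta>) * (\<Sum>t=1..T. consensus_sq t)"
proof -
  have "2 * \<beta>\<^sup>2 * (\<Sum>i<n. (\<sigma> i)\<^sup>2) * real T / \<beta> = 2 * \<beta> * (\<Sum>i<n. (\<sigma> i)\<^sup>2) * real T"
    using beta by (simp add: power2_eq_square)
  moreover have "(\<Sum>t=1..T. grad_err t) \<le> ennreal ((\<Sum>i<n. (\<sigma> i)\<^sup>2) / real b0 / \<beta>)
      + ennreal (2 * \<beta>\<^sup>2 * (\<Sum>i<n. (\<sigma> i)\<^sup>2) * real T / \<beta>)
      + ennreal (6 * L\<^sup>2 * \<alpha>\<^sup>2 / \<beta>) * (\<Sum>t=1..T-1. dir_sq t)
      + ennreal (12 * L\<^sup>2 / \<beta>) * (\<Sum>t=1..T. consensus_sq t)"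
    using beta by (intro sum_le_of_affine_recursion grad_err_Suc_le grad_err_first_le)
      (auto simp: sum_nonneg)
  ultimately show ?thesis
    by (simp add: mult.commute)
qed

lemma grad_err_avg_sum_le:
  "(\<Sum>t=1..T. grad_err_avg t) \<le> ennreal ((\<Sum>i<n. (\<sigma> i)\<^sup>2) / ((real n)\<^sup>2 * real b0 * \<beta>))
    + ennreal (2 * \<beta> * (\<Sum>i<n. (\<sigma> i)\<^sup>2) * real T / (real n)\<^sup>2)
    + ennreal (6 * L\<^sup>2 * \<alpha>\<^sup>2 / ((real n)\<^sup>2 * \<beta>)) * (\<Sum>t=1..T-1. dir_sq t)
    + ennreal (12 * L\<^sup>2 / (\<beta> * (real n)\<^sup>2)) * (\<Sum>t=1..T. consensus_sq t)"
proof -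
  have "(1 / real n)\<^sup>2 * (2 * \<beta>\<^sup>2 * (\<Sum>i<n. (\<sigma> i)\<^sup>2)) * real T / \<beta>
      = 2 * \<beta> * (\<Sum>i<n. (\<sigma> i)\<^sup>2) * real T / (real n)\<^sup>2"
    "(1 / real n)\<^sup>2 * (6 * L\<^sup>2 * \<alpha>\<^sup>2) / \<beta> = 6 * L\<^sup>2 * \<alpha>\<^sup>2 / ((real n)\<^sup>2 * \<beta>)"
    "(1 / real n)\<^sup>2 * (12 * L\<^sup>2) / \<beta> = 12 * L\<^sup>2 / (\<beta> * (real n)\<^sup>2)"
    using beta by (simp_all add: power2_eq_square power_divide)
  moreover have "(\<Sum>t=1..T. grad_err_avg t) \<le> ennreal ((\<Sum>i<n. (\<sigma> i)\<^sup>2) / ((real n)\<^sup>2 * real b0) / \<beta>)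
      + ennreal ((1 / real n)\<^sup>2 * (2 * \<beta>\<^sup>2 * (\<Sum>i<n. (\<sigma> i)\<^sup>2)) * real T / \<beta>)
      + ennreal ((1 / real n)\<^sup>2 * (6 * L\<^sup>2 * \<alpha>\<^sup>2) / \<beta>) * (\<Sum>t=1..T-1. dir_sq t)
      + ennreal ((1 / real n)\<^sup>2 * (12 * L\<^sup>2) / \<beta>) * (\<Sum>t=1..T. consensus_sq t)"
    using beta by (intro sum_le_of_affine_recursion grad_err_avg_Suc_le grad_err_avg_first_le)
      (auto simp: sum_nonneg)
  ultimately show ?thesis
    by (simp add: mult.commute mult.left_commute)
qed

end

theorem lemma7:
  fixes M :: "'a measure" and S :: "'s measure" and P :: "nat \<Rightarrow> 's measure"
    and \<xi> :: "nat \<Rightarrow> nat \<Rightarrow> nat \<Rightarrow> 'a \<Rightarrow> 's"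
    and f :: "nat \<Rightarrow> 'd::euclidean_space \<Rightarrow> 's \<Rightarrow> real"
    and Gf :: "nat \<Rightarrow> 'd \<Rightarrow> 's \<Rightarrow> 'd"
    and Gu :: "nat \<Rightarrow> 'd \<Rightarrow> 'd"
    and fhat :: "nat \<Rightarrow> 'd \<Rightarrow> 'd \<Rightarrow> 's \<Rightarrow> real"
    and h g :: "'d \<Rightarrow> real"
    and W :: "nat \<Rightarrow> nat \<Rightarrow> real" and E :: "(nat \<times> nat) set"
    and x xh z y :: "nat \<Rightarrow> nat \<Rightarrow> 'a \<Rightarrow> 'd" and x1 :: 'd
    and n b0 T :: nat and \<alpha> \<beta> \<mu> L :: real and \<sigma> :: "nat \<Rightarrow> real"
  assumes n_pos: "n \<ge> 1" and b0_pos: "b0 \<ge> 1"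
    and alpha: "0 < \<alpha>" "\<alpha> < 1" and beta: "0 < \<beta>" "\<beta> < 1" and mu: "\<mu> > 0"
    and T: "T > 1"
    \<comment> \<open>probability space and independent samples; node i's samples are distributed as P i\<close>
    and prob: "prob_space M"
    and indep: "prob_space.indep_vars M (\<lambda>_. S) (\<lambda>(i, t, r). \<xi> i t r) (sample_idx n b0)"
    and distr: "\<And>i t r. (i, t, r) \<in> sample_idx n b0 \<Longrightarrow> distr M S (\<xi> i t r) = P i"
    \<comment> \<open>f_i(., s) differentiable with gradient Gf; Gu i is the gradient of u_i = E f_i(., xi_i)\<close>
    and f_diff: "\<And>i v s. i < n \<Longrightarrow> ((\<lambda>w. f i w s) has_derivative (\<lambda>w. inner (Gf i v s) w)) (at v)"
    and u_diff: "\<And>i v. i < n \<Longrightarrow>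
        ((\<lambda>w. \<integral>s. f i w s \<partial>P i) has_derivative (\<lambda>w. inner (Gu i v) w)) (at v)"
    and Gf_meas: "\<And>i. i < n \<Longrightarrow> (\<lambda>(v, s). Gf i v s) \<in> borel_measurable (borel \<Otimes>\<^sub>M S)"
    \<comment> \<open>(A2) unbiasedness\<close>
    and A2: "\<And>i v. i < n \<Longrightarrow> integrable (P i) (Gf i v) \<and> (\<integral>s. Gf i v s \<partial>P i) = Gu i v"
    \<comment> \<open>(A3) bounded variance\<close>
    and A3: "\<And>i v. i < n \<Longrightarrow>
        (\<integral>\<^sup>+ s. ennreal ((norm (Gf i v s - Gu i v))\<^sup>2) \<partial>P i) \<le> ennreal ((\<sigma> i)\<^sup>2)"
    \<comment> \<open>(A4) mean-squared Lipschitz gradients\<close>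
    and A4: "\<And>i v w. i < n \<Longrightarrow>
        (\<integral>\<^sup>+ s. ennreal ((norm (Gf i v s - Gf i w s))\<^sup>2) \<partial>P i) \<le> ennreal (L\<^sup>2 * (norm (v - w))\<^sup>2)"
    \<comment> \<open>(A7) communication graph and mixing matrix\<close>
    and E_sub: "E \<subseteq> {..<n} \<times> {..<n}"
    and E_sym: "\<And>i j. (i, j) \<in> E \<Longrightarrow> (j, i) \<in> E"
    and E_conn: "\<And>i j. i < n \<Longrightarrow> j < n \<Longrightarrow> (i, j) \<in> E\<^sup>*"
    and W_nonneg: "\<And>i j. i < n \<Longrightarrow> j < n \<Longrightarrow> W i j \<ge> 0"
    and W_row: "\<And>i. i < n \<Longrightarrow> (\<Sum>j<n. W i j) = 1"
    and W_col: "\<And>j. j < n \<Longrightarrow> (\<Sum>i<n. W i j) = 1"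
    and W_diag: "\<And>i. i < n \<Longrightarrow> W i i > 0"
    and W_edge: "\<And>i j. i < n \<Longrightarrow> j < n \<Longrightarrow> i \<noteq> j \<Longrightarrow> (W i j > 0 \<longleftrightarrow> (i, j) \<in> E)"
    \<comment> \<open>problem data\<close>
    and h_conv: "convex_on UNIV h" and g_conv: "convex_on UNIV g"
    and fhat_sc: "\<And>i v s. i < n \<Longrightarrow> strongly_convex \<mu> (\<lambda>w. fhat i w v s)"
    and fhat_grad: "\<And>i v s. i < n \<Longrightarrow>
        ((\<lambda>w. fhat i w v s) has_derivative (\<lambda>w. inner (Gf i v s) w)) (at v)"
    \<comment> \<open>D-MSSCA iterates\<close>
    and x1_in: "g x1 \<le> 0"
    and x_init: "\<And>i \<omega>. i < n \<Longrightarrow> \<omega> \<in> space M \<Longrightarrow> x i 1 \<omega> = x1"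
    and z_init: "\<And>i \<omega>. i < n \<Longrightarrow> \<omega> \<in> space M \<Longrightarrow>
        z i 1 \<omega> = (1 / real b0) *\<^sub>R (\<Sum>r=1..b0. Gf i (x i 1 \<omega>) (\<xi> i 1 r \<omega>))"
    and y_init: "\<And>i \<omega>. i < n \<Longrightarrow> \<omega> \<in> space M \<Longrightarrow> y i 1 \<omega> = z i 1 \<omega>"
    and xh_min: "\<And>i t \<omega>. i < n \<Longrightarrow> t \<ge> 1 \<Longrightarrow> \<omega> \<in> space M \<Longrightarrow>
        (let \<Phi> = (\<lambda>v. fhat i v (x i t \<omega>) (\<xi> i t 1 \<omega>)
                    + (if t = 1 then 0 else (1 - \<beta>) * inner (z i (t - 1) \<omega> - Gf i (x i (t - 1) \<omega>) (\<xi> i t 1 \<omega>)) (v - x i t \<omega>))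
                    + inner (y i t \<omega> - z i t \<omega>) (v - x i t \<omega>) + h v)
         in g (xh i t \<omega>) \<le> 0 \<and> (\<forall>v. g v \<le> 0 \<longrightarrow> \<Phi> (xh i t \<omega>) \<le> \<Phi> v))"
    and xh_adapted: "\<And>i t. i < n \<Longrightarrow> t \<ge> 1 \<Longrightarrow> xh i t \<in> borel_measurable (hist M S n b0 \<xi> t)"
    and x_upd: "\<And>i t \<omega>. i < n \<Longrightarrow> t \<ge> 1 \<Longrightarrow> \<omega> \<in> space M \<Longrightarrow>
        x i (t + 1) \<omega> = (\<Sum>j<n. W i j *\<^sub>R (x j t \<omega> + \<alpha> *\<^sub>R (xh j t \<omega> - x j t \<omega>)))"
    and z_upd: "\<And>i t \<omega>. i < n \<Longrightarrow> t \<ge> 1 \<Longrightarrow> \<omega> \<in> space M \<Longrightarrow>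
        z i (t + 1) \<omega> = Gf i (x i (t + 1) \<omega>) (\<xi> i (t + 1) 1 \<omega>)
                       + (1 - \<beta>) *\<^sub>R (z i t \<omega> - Gf i (x i t \<omega>) (\<xi> i (t + 1) 1 \<omega>))"
    and y_upd: "\<And>i t \<omega>. i < n \<Longrightarrow> t \<ge> 1 \<Longrightarrow> \<omega> \<in> space M \<Longrightarrow>
        y i (t + 1) \<omega> = (\<Sum>j<n. W i j *\<^sub>R (y j t \<omega> + z j (t + 1) \<omega> - z j t \<omega>))"
  shows
    "(\<Sum>t=1..T. \<integral>\<^sup>+ \<omega>. ennreal ((norm (avg n (\<lambda>i. z i t \<omega>) - avg n (\<lambda>i. Gu i (x i t \<omega>))))\<^sup>2) \<partial>M)
       \<le> ennreal ((\<Sum>i<n. (\<sigma> i)\<^sup>2) / ((real n)\<^sup>2 * real b0 * \<beta>))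
         + ennreal (2 * \<beta> * (\<Sum>i<n. (\<sigma> i)\<^sup>2) * real T / (real n)\<^sup>2)
         + ennreal (6 * L\<^sup>2 * \<alpha>\<^sup>2 / ((real n)\<^sup>2 * \<beta>))
             * (\<Sum>t=1..T-1. \<integral>\<^sup>+ \<omega>. ennreal ((stk_norm n (\<lambda>i. xh i t \<omega> - x i t \<omega>))\<^sup>2) \<partial>M)
         + ennreal (12 * L\<^sup>2 / (\<beta> * (real n)\<^sup>2))
             * (\<Sum>t=1..T. \<integral>\<^sup>+ \<omega>. ennreal ((stk_norm n (\<lambda>i. x i t \<omega> - avg n (\<lambda>j. x j t \<omega>)))\<^sup>2) \<partial>M)
     \<and> (\<Sum>t=1..T. \<integral>\<^sup>+ \<omega>. ennreal ((stk_norm n (\<lambda>i. z i t \<omega> - Gu i (x i t \<omega>)))\<^sup>2) \<partial>M)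
       \<le> ennreal ((\<Sum>i<n. (\<sigma> i)\<^sup>2) / (real b0 * \<beta>))
         + ennreal (2 * \<beta> * (\<Sum>i<n. (\<sigma> i)\<^sup>2) * real T)
         + ennreal (6 * L\<^sup>2 * \<alpha>\<^sup>2 / \<beta>)
             * (\<Sum>t=1..T-1. \<integral>\<^sup>+ \<omega>. ennreal ((stk_norm n (\<lambda>i. xh i t \<omega> - x i t \<omega>))\<^sup>2) \<partial>M)
         + ennreal (12 * L\<^sup>2 / \<beta>)
             * (\<Sum>t=1..T. \<integral>\<^sup>+ \<omega>. ennreal ((stk_norm n (\<lambda>i. x i t \<omega> - avg n (\<lambda>j. x j t \<omega>)))\<^sup>2) \<partial>M)"
proof -
  interpret D: dmssca M S P \<xi> Gf Gu W x xh z x1 n b0 \<alpha> \<beta> L \<sigma>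
    using b0_pos beta indep distr Gf_meas A2 A3 A4 W_nonneg W_row W_col
      x_init z_init xh_adapted x_upd z_upd
    by (intro dmssca.intro dmssca_axioms.intro prob) auto
  show ?thesis
    using D.grad_err_avg_sum_le[of T] D.grad_err_sum_le[of T]
    unfolding D.grad_err_avg_def D.grad_err_def D.dir_sq_def D.consensus_sq_def by blast
qed

end
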